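(* On $\mathcal{P}(\mathbb{R}^{2m},\mathbb{C})\cap\ker(\Delta_x,\Delta_u)$, $$[S_x,S_u]=\frac{H_x-H_u}{(1+H_x)(1+H_u)}\,CA-(H_x-H_u).$$
   Context: Fix an integer $m>4$. For $x,u\in\mathbb{R}^m$ let $\mathcal{P}(\mathbb{R}^{2m},\mathbb{C})$ be complex polynomials in $(x,u)$, $\mathcal{P}_{p,q}$ those of bidegree $(p,q)$. Write $|x|^2=\sum x_j^2$, $\langle u,x\rangle=\sum u_jx_j$, $\Delta_x=\sum\partial_{x_j}^2$, $\Delta_u=\sum\partial_{u_j}^2$, $\langle\partial_u,\partial_x\rangle=\sum\partial_{u_j}\partial_{x_j}$, $\langle x,\partial_u\rangle=\sum x_j\partial_{u_j}$, $\langle u,\partial_x\rangle=\sum u_j\partial_{x_j}$, $\mathbb{E}_x=\sum x_j\partial_{x_j}$, $\mathbb{E}_u=\sum u_j\partial_{u_j}$, $H_x=-(\mathbb{E}_x+\frac m2)$, $H_u=-(\mathbb{E}_u+\frac m2)$, $\ker(D_1,\dots,D_r)=\bigcap\ker D_i$. Every $P\in\mathcal{P}_{p,q}$ is uniquely $\sum_{a,b\ge0}|x|^{2a}|u|^{2b}H'_{p-2a,q-2b}$ with $H'_{p-2a,q-2b}\in\mathcal{P}_{p-2a,q-2b}\cap\ker(\Delta_x,\Delta_u)$; $\pi_{\mathfrak{s}}P:=H'_{p,q}$. On $\ker(\Delta_x,\Delta_u)$: $S_x=\pi_{\mathfrak{s}}\langle x,\partial_u\rangle$, $S_u=\pi_{\mathfrak{s}}\langle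 u,\partial_x\rangle$, $A=\pi_{\mathfrak{s}}\langle\partial_u,\partial_x\rangle$, $C=\pi_{\mathfrak{s}}\langle u,x\rangle$. Convention: a rational function of $H_x,H_u$ written to the left of an operator product is evaluated at the eigenvalues of $H_x,H_u$ on the bihomogeneous output of that product; the term $-(H_x-H_u)$ acts as multiplication by the corresponding eigenvalue. *)

theory Defs
  imports Complex_Main "HOL-Library.Poly_Mapping"
begin

text \<open>For a fixed m, the variable
  with index j (j < m) is x_j and the variable with index m + j (j < m) is u_j.\<close>

type_synonym cpoly = "(nat \<Rightarrow>\<^sub>0 nat) \<Rightarrow>\<^sub>0 complex"

definition var :: "nat \<Rightarrow> cpoly" where
  "var i = Poly_Mapping.single (Poly_Mapping.single i 1) 1"

definition cconst :: "complex \<Rightarrow> cpoly" where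
  "cconst c = Poly_Mapping.single 0 c"

definition pderiv_var :: "nat \<Rightarrow> cpoly \<Rightarrow> cpoly" where
  "pderiv_var i P = (\<Sum>\<alpha>\<in>Poly_Mapping.keys P. Poly_Mapping.single (\<alpha> - Poly_Mapping.single i (1::nat))
      (of_nat (Poly_Mapping.lookup \<alpha> i) * Poly_Mapping.lookup P \<alpha> :: complex))"

definition xdeg :: "nat \<Rightarrow> (nat \<Rightarrow>\<^sub>0 nat) \<Rightarrow> nat" where
  "xdeg m \<alpha> = (\<Sum>j<m. Poly_Mapping.lookup \<alpha> j)"

definition udeg :: "nat \<Rightarrow> (nat \<Rightarrow>\<^sub>0 nat) \<Rightarrow> nat" where
  "udeg m \<alpha> = (\<Sum>j<m. Poly_Mapping.lookup \<alpha> (m + j))"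

definition in_vars :: "nat \<Rightarrow> cpoly \<Rightarrow> bool" where
  "in_vars m P \<longleftrightarrow> (\<forall>\<alpha>\<in>Poly_Mapping.keys P. \<forall>i. Poly_Mapping.lookup \<alpha> i \<noteq> 0 \<longrightarrow> i < 2 * m)"

definition bihom :: "nat \<Rightarrow> nat \<Rightarrow> nat \<Rightarrow> cpoly \<Rightarrow> bool" where
  "bihom m p q P \<longleftrightarrow> (\<forall>\<alpha>\<in>Poly_Mapping.keys P. xdeg m \<alpha> = p \<and> udeg m \<alpha> = q)"

definition bicomp :: "nat \<Rightarrow> nat \<Rightarrow> nat \<Rightarrow> cpoly \<Rightarrow> cpoly" where
  "bicomp m p q P = (\<Sum>\<alpha>\<in>{\<alpha>\<in>Poly_Mapping.keys P. xdeg m \<alpha> = p \<and> udeg m \<alpha> = q}.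
      Poly_Mapping.single \<alpha> (Poly_Mapping.lookup P \<alpha>))"

definition lap_x :: "nat \<Rightarrow> cpoly \<Rightarrow> cpoly" where
  "lap_x m P = (\<Sum>j<m. pderiv_var j (pderiv_var j P))"

definition lap_u :: "nat \<Rightarrow> cpoly \<Rightarrow> cpoly" where
  "lap_u m P = (\<Sum>j<m. pderiv_var (m + j) (pderiv_var (m + j) P))"

definition normsq_x :: "nat \<Rightarrow> cpoly" where
  "normsq_x m = (\<Sum>j<m. var j * var j)"

definition normsq_u :: "nat \<Rightarrow> cpoly" where
  "normsq_u m = (\<Sum>j<m. var (m + j) * var (m + j))"

definition harm :: "nat \<Rightarrow> cpoly \<Rightarrow> bool" where
  "harm m P \<longleftrightarrow> in_vars m P \<and> lap_x m P = 0 \<and> lap_u m P = 0"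

text \<open>On P_{p,q} this is exactly the paper's definition (the components may be taken
  bihomogeneous); in general it is its linear extension over bihomogeneous components.\<close>
definition pi_s :: "nat \<Rightarrow> cpoly \<Rightarrow> cpoly" where
  "pi_s m P = (THE H. \<exists>N Hs. (\<forall>a b. harm m (Hs a b)) \<and>
      P = (\<Sum>a\<le>N. \<Sum>b\<le>N. normsq_x m ^ a * normsq_u m ^ b * Hs a b) \<and> H = Hs 0 0)"

definition x_du :: "nat \<Rightarrow> cpoly \<Rightarrow> cpoly" where
  "x_du m P = (\<Sum>j<m. var j * pderiv_var (m + j) P)"

definition u_dx :: "nat \<Rightarrow> cpoly \<Rightarrow> cpoly" where
  "u_dx m P = (\<Sum>j<m. var (m + j) * pderiv_var j P)"

definition du_dx :: "nat \<Rightarrow> cpoly \<Rightarrow> cpoly" where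
  "du_dx m P = (\<Sum>j<m. pderiv_var (m + j) (pderiv_var j P))"

definition ux :: "nat \<Rightarrow> cpoly" where
  "ux m = (\<Sum>j<m. var (m + j) * var j)"

definition S_x :: "nat \<Rightarrow> cpoly \<Rightarrow> cpoly" where "S_x m P = pi_s m (x_du m P)"
definition S_u :: "nat \<Rightarrow> cpoly \<Rightarrow> cpoly" where "S_u m P = pi_s m (u_dx m P)"
definition A_op :: "nat \<Rightarrow> cpoly \<Rightarrow> cpoly" where "A_op m P = pi_s m (du_dx m P)"
definition C_op :: "nat \<Rightarrow> cpoly \<Rightarrow> cpoly" where "C_op m P = pi_s m (ux m * P)"

text \<open>Eigenvalues of H_x = -(E_x + m/2) and H_u = -(E_u + m/2) on bidegree (p,q).\<close>
definition eig_Hx :: "nat \<Rightarrow> nat \<Rightarrow> complex" where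
  "eig_Hx m p = - (of_nat p + of_nat m / 2)"

definition eig_Hu :: "nat \<Rightarrow> nat \<Rightarrow> complex" where
  "eig_Hu m q = - (of_nat q + of_nat m / 2)"

text \<open>Apply f(H_x,H_u), given as function of the bidegree, by acting on each
  bihomogeneous component by the corresponding eigenvalue.\<close>
definition eig_apply :: "nat \<Rightarrow> (nat \<Rightarrow> nat \<Rightarrow> complex) \<Rightarrow> cpoly \<Rightarrow> cpoly" where
  "eig_apply m f P = (\<Sum>(p, q)\<in>(\<lambda>\<alpha>. (xdeg m \<alpha>, udeg m \<alpha>)) ` Poly_Mapping.keys P.
      cconst (f p q) * bicomp m p q P)"

end

theory Submission
  imports Defs
begin

text \<open>
  Fischer decomposition makes \<open>\<pi>\<^sub>s\<close> well defined.  Existence: by induction on the degree,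
  since \<open>\<Delta>(|y|^(2k+2) H)\<close> is a nonzero multiple of \<open>|y|^(2k) H\<close> for harmonic homogeneous \<open>H\<close>.
  Uniqueness: for the Fischer inner product multiplication by a variable is adjoint to the
  corresponding derivative, so a polynomial harmonic in \<open>x\<close> and in \<open>u\<close> is orthogonal to the ideal
  generated by \<open>|x|\<^sup>2\<close> and \<open>|u|\<^sup>2\<close>.

  Let \<open>P\<close> be harmonic and \<open>D = \<langle>\<partial>\<^sub>u,\<partial>\<^sub>x\<rangle>P = A P\<close>, again harmonic.  As \<open>\<Delta>\<^sub>u\<langle>u,\<partial>\<^sub>x\<rangle>P = 2 D\<close> and
  \<open>\<Delta>\<^sub>u(|u|\<^sup>2K) = (2m + 4E\<^sub>u) K\<close> for \<open>u\<close>-harmonic \<open>K\<close>, we get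
  \<open>S\<^sub>u P = \<langle>u,\<partial>\<^sub>x\<rangle>P - |u|\<^sup>2 (m + 2E\<^sub>u)^(-1) D\<close>, and symmetrically for \<open>S\<^sub>x\<close>.  Expanding
  \<open>\<langle>x,\<partial>\<^sub>u\<rangle>S\<^sub>u P - \<langle>u,\<partial>\<^sub>x\<rangle>S\<^sub>x P\<close>, the commutator \<open>[\<langle>x,\<partial>\<^sub>u\<rangle>, \<langle>u,\<partial>\<^sub>x\<rangle>] = E\<^sub>x - E\<^sub>u = -(H\<^sub>x - H\<^sub>u)\<close>
  gives the second term, the multiples of \<open>|x|\<^sup>2\<close> and \<open>|u|\<^sup>2\<close> are killed by \<open>\<pi>\<^sub>s\<close>, and what remains is
  \<open>\<langle>u,x\<rangle>\<close> times a function of \<open>H\<^sub>x, H\<^sub>u\<close> applied to \<open>D\<close>.  Since \<open>\<pi>\<^sub>s\<close> commutes with such functions,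
  this is the first term.
\<close>

abbreviation lookup :: "('a \<Rightarrow>\<^sub>0 'b::zero) \<Rightarrow> 'a \<Rightarrow> 'b" where
  "lookup \<equiv> Poly_Mapping.lookup"

section \<open>Coefficient calculus\<close>

definition unit_exp :: "nat \<Rightarrow> nat \<Rightarrow>\<^sub>0 nat" where
  "unit_exp i = Poly_Mapping.single i 1"

lemma lookup_single_eq_if: "lookup (Poly_Mapping.single i n) j = (if i = j then n else 0)"
  by (simp add: Poly_Mapping.lookup_single when_def)

lemma lookup_unit_exp: "lookup (unit_exp i) j = (if i = j then 1 else 0)"
  by (simp add: unit_exp_def lookup_single_eq_if)

lemma add_unit_exp_diff_cancel: "\<beta> + unit_exp i - unit_exp i = \<beta>"
  by (auto simp: poly_mapping_eq_iff fun_eq_iff lookup_add lookup_minus lookup_unit_exp)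

lemma diff_unit_exp_add_cancel: "0 < lookup \<beta> i \<Longrightarrow> \<beta> - unit_exp i + unit_exp i = \<beta>"
  by (auto simp: poly_mapping_eq_iff fun_eq_iff lookup_add lookup_minus lookup_unit_exp)

lemma eq_unit_exp_add_iff: "\<beta> = unit_exp i + q \<longleftrightarrow> 0 < lookup \<beta> i \<and> q = \<beta> - unit_exp i"
  by (auto intro!: poly_mapping_eqI simp: lookup_add lookup_minus lookup_unit_exp)

lemma lookup_var_mult:
  "lookup (var i * P) \<beta> = (if 0 < lookup \<beta> i then lookup P (\<beta> - unit_exp i) else 0)"
proof -
  have delta: "(\<lambda>a. (1 when unit_exp i = a) * X a) = (\<lambda>a. if unit_exp i = a then X a else 0)"
    for X :: "_ \<Rightarrow> complex"
    by (auto simp: when_def fun_eq_iff)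
  have "lookup (var i * P) \<beta> = (\<Sum>l. (1 when unit_exp i = l) * (\<Sum>q. lookup P q when \<beta> = l + q))"
    unfolding var_def lookup_mult Poly_Mapping.lookup_single unit_exp_def by simp
  also have "\<dots> = (\<Sum>q. lookup P q when \<beta> = unit_exp i + q)"
    by (simp only: delta) simp
  also have "\<dots> = (\<Sum>q. lookup P q when (0 < lookup \<beta> i \<and> q = \<beta> - unit_exp i))"
    by (simp only: eq_unit_exp_add_iff)
  also have "\<dots> = (if 0 < lookup \<beta> i then lookup P (\<beta> - unit_exp i) else 0)"
    by (cases "0 < lookup \<beta> i") (simp_all add: when_def)
  finally show ?thesis .
qed

lemma lookup_pderiv_var:
  "lookup (pderiv_var i P) \<beta> = of_nat (lookup \<beta> i + 1) * lookup P (\<beta> + unit_exp i)"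
proof -
  have shift: "\<alpha> - unit_exp i = \<beta> \<longleftrightarrow> \<alpha> = \<beta> + unit_exp i" if "lookup \<alpha> i \<noteq> 0" for \<alpha>
    using that by (auto simp: poly_mapping_eq_iff fun_eq_iff lookup_add lookup_minus lookup_unit_exp)
  have "lookup (pderiv_var i P) \<beta> = (\<Sum>\<alpha>\<in>Poly_Mapping.keys P.
      of_nat (lookup \<alpha> i) * lookup P \<alpha> when \<alpha> - unit_exp i = \<beta>)"
    unfolding pderiv_var_def lookup_sum unit_exp_def by (simp add: Poly_Mapping.lookup_single)
  also have "\<dots> = (\<Sum>\<alpha>\<in>Poly_Mapping.keys P.
      of_nat (lookup \<alpha> i) * lookup P \<alpha> when \<alpha> = \<beta> + unit_exp i)"
  proof (intro sum.cong refl)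
    fix \<alpha>
    show "(of_nat (lookup \<alpha> i) * lookup P \<alpha> when \<alpha> - unit_exp i = \<beta>) =
        (of_nat (lookup \<alpha> i) * lookup P \<alpha> when \<alpha> = \<beta> + unit_exp i)"
    proof (cases "lookup \<alpha> i = 0")
      case True
      then have "\<alpha> \<noteq> \<beta> + unit_exp i" by (auto simp: lookup_add lookup_unit_exp)
      then show ?thesis using True by simp
    qed (simp add: shift)
  qed
  also have "\<dots> = of_nat (lookup \<beta> i + 1) * lookup P (\<beta> + unit_exp i)"
    by (cases "\<beta> + unit_exp i \<in> Poly_Mapping.keys P")
       (auto simp: when_def lookup_add lookup_unit_exp in_keys_iff sum.delta)
  finally show ?thesis .
qed

lemma lookup_cconst_mult: "lookup (cconst c * P) \<beta> = c * lookup P \<beta>"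
proof -
  have delta: "(\<lambda>a. (c when 0 = a) * X a) = (\<lambda>a. if 0 = a then c * X a else 0)"
    for X :: "_ \<Rightarrow> complex"
    by (auto simp: when_def fun_eq_iff)
  have "lookup (cconst c * P) \<beta> = (\<Sum>l. (c when 0 = l) * (\<Sum>q. lookup P q when \<beta> = l + q))"
    unfolding cconst_def lookup_mult Poly_Mapping.lookup_single by simp
  also have "\<dots> = c * lookup P \<beta>"
    by (simp only: delta) (simp add: when_def)
  finally show ?thesis .
qed

definition scale_coeffs :: "((nat \<Rightarrow>\<^sub>0 nat) \<Rightarrow> complex) \<Rightarrow> cpoly \<Rightarrow> cpoly" where
  "scale_coeffs w P = Poly_Mapping.mapp (\<lambda>\<alpha> c. w \<alpha> * c) P"

lemma lookup_scale_coeffs: "lookup (scale_coeffs w P) \<beta> = w \<beta> * lookup P \<beta>"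
  by (auto simp: scale_coeffs_def Poly_Mapping.lookup_mapp when_def in_keys_iff)

lemma scale_coeffs_const: "scale_coeffs (\<lambda>_. c) P = cconst c * P"
  by (rule poly_mapping_eqI) (simp add: lookup_scale_coeffs lookup_cconst_mult)

lemma numeral_mult_eq_scale_coeffs: "(numeral n :: cpoly) * P = scale_coeffs (\<lambda>_. numeral n) P"
  by (simp add: scale_coeffs_const cconst_def)

lemma scale_coeffs_one: "scale_coeffs (\<lambda>_. 1) P = P"
  by (rule poly_mapping_eqI) (simp add: lookup_scale_coeffs)

lemma scale_coeffs_scale_coeffs:
  "scale_coeffs w (scale_coeffs v P) = scale_coeffs (\<lambda>\<beta>. w \<beta> * v \<beta>) P"
  by (rule poly_mapping_eqI) (simp add: lookup_scale_coeffs)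

lemma scale_coeffs_add: "scale_coeffs w (P + Q) = scale_coeffs w P + scale_coeffs w Q"
  by (rule poly_mapping_eqI) (simp add: lookup_scale_coeffs lookup_add algebra_simps)

lemma scale_coeffs_zero [simp]: "scale_coeffs w 0 = 0"
  by (rule poly_mapping_eqI) (simp add: lookup_scale_coeffs)

lemma scale_coeffs_sum: "scale_coeffs w (\<Sum>j\<in>J. f j) = (\<Sum>j\<in>J. scale_coeffs w (f j))"
  by (induction J rule: infinite_finite_induct) (auto simp: scale_coeffs_add)

lemma scale_coeffs_add_weight:
  "scale_coeffs w P + scale_coeffs v P = scale_coeffs (\<lambda>\<beta>. w \<beta> + v \<beta>) P"
  by (rule poly_mapping_eqI) (simp add: lookup_scale_coeffs lookup_add algebra_simps)

lemma scale_coeffs_diff_weight: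
  "scale_coeffs w P - scale_coeffs v P = scale_coeffs (\<lambda>\<beta>. w \<beta> - v \<beta>) P"
  by (rule poly_mapping_eqI) (simp add: lookup_scale_coeffs lookup_minus algebra_simps)

lemma scale_coeffs_sum_weight:
  "(\<Sum>j\<in>J. scale_coeffs (w j) P) = scale_coeffs (\<lambda>\<beta>. \<Sum>j\<in>J. w j \<beta>) P"
  by (rule poly_mapping_eqI) (simp add: lookup_scale_coeffs lookup_sum sum_distrib_right)

lemma scale_coeffs_cong:
  "(\<And>\<beta>. lookup P \<beta> \<noteq> 0 \<Longrightarrow> w \<beta> = v \<beta>) \<Longrightarrow> scale_coeffs w P = scale_coeffs v P"
  by (rule poly_mapping_eqI) (metis lookup_scale_coeffs mult_zero_right)

lemma pderiv_var_add: "pderiv_var i (P + Q) = pderiv_var i P + pderiv_var i Q"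
  by (rule poly_mapping_eqI) (simp add: lookup_pderiv_var lookup_add algebra_simps)

lemma pderiv_var_diff: "pderiv_var i (P - Q) = pderiv_var i P - pderiv_var i Q"
  by (rule poly_mapping_eqI) (simp add: lookup_pderiv_var lookup_minus algebra_simps)

lemma pderiv_var_zero [simp]: "pderiv_var i 0 = 0"
  by (rule poly_mapping_eqI) (simp add: lookup_pderiv_var)

lemma pderiv_var_sum: "pderiv_var i (\<Sum>j\<in>J. f j) = (\<Sum>j\<in>J. pderiv_var i (f j))"
  by (induction J rule: infinite_finite_induct) (auto simp: pderiv_var_add)

lemma pderiv_var_mult:
  "pderiv_var i (var j * P) = (if i = j then P else 0) + var j * pderiv_var i P"
proof (rule poly_mapping_eqI)
  fix \<beta>
  show "lookup (pderiv_var i (var j * P)) \<beta> =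
      lookup ((if i = j then P else 0) + var j * pderiv_var i P) \<beta>"
  proof (cases "i = j")
    case True
    have "lookup (var j * pderiv_var i P) \<beta> = of_nat (lookup \<beta> i) * lookup P \<beta>"
      using True diff_unit_exp_add_cancel[of \<beta> i]
      by (cases "lookup \<beta> i")
         (simp_all add: lookup_var_mult lookup_pderiv_var lookup_minus lookup_unit_exp)
    moreover have "lookup (pderiv_var i (var j * P)) \<beta> = of_nat (lookup \<beta> i + 1) * lookup P \<beta>"
      using True by (simp add: lookup_pderiv_var lookup_var_mult add_unit_exp_diff_cancel lookup_add
          lookup_unit_exp)
    ultimately show ?thesis
      using True by (simp add: lookup_add algebra_simps)
  next
    case False
    have "0 < lookup \<beta> j \<Longrightarrow> \<beta> + unit_exp i - unit_exp j = \<beta> - unit_exp j + unit_exp i"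
      using False by (auto simp: poly_mapping_eq_iff fun_eq_iff lookup_add lookup_minus lookup_unit_exp)
    then show ?thesis
      using False
      by (auto simp: lookup_pderiv_var lookup_var_mult lookup_add lookup_unit_exp lookup_minus)
  qed
qed

lemma pderiv_var_commute: "pderiv_var i (pderiv_var j P) = pderiv_var j (pderiv_var i P)"
  by (rule poly_mapping_eqI)
     (simp add: lookup_pderiv_var lookup_add lookup_unit_exp algebra_simps add.assoc add.left_commute)

lemma pderiv_var_scale_coeffs:
  "pderiv_var i (scale_coeffs w P) = scale_coeffs (\<lambda>\<beta>. w (\<beta> + unit_exp i)) (pderiv_var i P)"
  by (rule poly_mapping_eqI) (simp add: lookup_pderiv_var lookup_scale_coeffs algebra_simps)

lemma var_mult_scale_coeffs:
  "var i * scale_coeffs (\<lambda>\<beta>. w (\<beta> + unit_exp i)) P = scale_coeffs w (var i * P)"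
  by (rule poly_mapping_eqI) (simp add: lookup_var_mult lookup_scale_coeffs diff_unit_exp_add_cancel)

lemma var_mult_pderiv_var: "var i * pderiv_var i P = scale_coeffs (\<lambda>\<beta>. of_nat (lookup \<beta> i)) P"
proof (rule poly_mapping_eqI)
  fix \<beta>
  show "lookup (var i * pderiv_var i P) \<beta> = lookup (scale_coeffs (\<lambda>\<beta>. of_nat (lookup \<beta> i)) P) \<beta>"
    using diff_unit_exp_add_cancel[of \<beta> i]
    by (cases "lookup \<beta> i")
       (simp_all add: lookup_var_mult lookup_scale_coeffs lookup_pderiv_var lookup_minus lookup_unit_exp)
qed


section \<open>Blocks of variables\<close>

text \<open>The block of m variables with indices b, \<dots>, b + m - 1; the x-block is b = 0 and the
  u-block is b = m.\<close>

definition block_lap :: "nat \<Rightarrow> nat \<Rightarrow> cpoly \<Rightarrow> cpoly" where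
  "block_lap m b P = (\<Sum>j<m. pderiv_var (b + j) (pderiv_var (b + j) P))"

definition block_normsq :: "nat \<Rightarrow> nat \<Rightarrow> cpoly" where
  "block_normsq m b = (\<Sum>j<m. var (b + j) * var (b + j))"

definition block_deg :: "nat \<Rightarrow> nat \<Rightarrow> (nat \<Rightarrow>\<^sub>0 nat) \<Rightarrow> nat" where
  "block_deg m b \<alpha> = (\<Sum>j<m. lookup \<alpha> (b + j))"

abbreviation in_block :: "nat \<Rightarrow> nat \<Rightarrow> nat \<Rightarrow> bool" where
  "in_block m b i \<equiv> b \<le> i \<and> i < b + m"

lemma lap_x_eq: "lap_x m = block_lap m 0"
  by (simp add: fun_eq_iff lap_x_def block_lap_def)

lemma lap_u_eq: "lap_u m = block_lap m m"
  by (simp add: fun_eq_iff lap_u_def block_lap_def)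

lemma normsq_x_eq: "normsq_x m = block_normsq m 0"
  by (simp add: normsq_x_def block_normsq_def)

lemma normsq_u_eq: "normsq_u m = block_normsq m m"
  by (simp add: normsq_u_def block_normsq_def)

lemma xdeg_eq: "xdeg m = block_deg m 0"
  by (simp add: fun_eq_iff xdeg_def block_deg_def)

lemma udeg_eq: "udeg m = block_deg m m"
  by (simp add: fun_eq_iff udeg_def block_deg_def)

lemma sum_if_in_block: "(\<Sum>j<m. if i = b + j then c else 0) = (if in_block m b i then c else 0)"
proof (cases "in_block m b i")
  case True
  then have "(\<Sum>j<m. if i = b + j then c else 0) = (\<Sum>j<m. if j = i - b then c else 0)"
    by (intro sum.cong) auto
  also have "\<dots> = c"
    using True by (simp add: sum.delta; linarith)
  finally show ?thesis
    using True by simp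
qed (auto intro!: sum.neutral)

lemma block_deg_add_unit_exp:
  "block_deg m b (\<beta> + unit_exp i) = block_deg m b \<beta> + (if in_block m b i then 1 else 0)"
proof -
  have "block_deg m b (\<beta> + unit_exp i) = block_deg m b \<beta> + (\<Sum>j<m. if i = b + j then 1 else 0)"
    by (simp add: block_deg_def lookup_add lookup_unit_exp sum.distrib)
  then show ?thesis
    by (simp add: sum_if_in_block)
qed

lemma block_normsq_mult: "block_normsq m b * X = (\<Sum>j<m. var (b + j) * (var (b + j) * X))"
  by (simp add: block_normsq_def sum_distrib_right mult.assoc)

lemma pderiv_var_square_mult:
  "pderiv_var i (var a * (var a * X)) =
    (if i = a then var a * X + var a * X else 0) + var a * (var a * pderiv_var i X)"
  by (cases "i = a") (simp_all add: pderiv_var_mult distrib_left add.assoc)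

lemma pderiv_var_block_normsq_mult:
  "pderiv_var i (block_normsq m b * X) =
    (if in_block m b i then var i * X + var i * X else 0) + block_normsq m b * pderiv_var i X"
proof -
  have "pderiv_var i (block_normsq m b * X) =
      (\<Sum>j<m. if i = b + j then var i * X + var i * X else 0) +
      (\<Sum>j<m. var (b + j) * (var (b + j) * pderiv_var i X))"
    unfolding block_normsq_mult pderiv_var_sum pderiv_var_square_mult sum.distrib
    by (intro arg_cong2[where f = "(+)"] sum.cong) auto
  then show ?thesis
    by (simp only: sum_if_in_block block_normsq_mult)
qed

lemma block_euler:
  "(\<Sum>j<m. var (b + j) * pderiv_var (b + j) X) = scale_coeffs (\<lambda>\<beta>. of_nat (block_deg m b \<beta>)) X"
  by (simp add: var_mult_pderiv_var scale_coeffs_sum_weight block_deg_def)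

lemma block_lap_block_normsq_mult:
  "block_lap m b (block_normsq m b * X) =
    block_normsq m b * block_lap m b X + scale_coeffs (\<lambda>\<beta>. of_nat (2 * m + 4 * block_deg m b \<beta>)) X"
proof -
  have "pderiv_var (b + j) (pderiv_var (b + j) (block_normsq m b * X)) =
      scale_coeffs (\<lambda>_. 2) X + scale_coeffs (\<lambda>_. 4) (var (b + j) * pderiv_var (b + j) X) +
      block_normsq m b * pderiv_var (b + j) (pderiv_var (b + j) X)" if "j < m" for j
  proof -
    have "pderiv_var (b + j) (pderiv_var (b + j) (block_normsq m b * X)) =
        (X + var (b + j) * pderiv_var (b + j) X) + (X + var (b + j) * pderiv_var (b + j) X) +
        (var (b + j) * pderiv_var (b + j) X + var (b + j) * pderiv_var (b + j) X +
         block_normsq m b * pderiv_var (b + j) (pderiv_var (b + j) X))"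
      using that by (simp only: pderiv_var_block_normsq_mult pderiv_var_add pderiv_var_mult
          if_P[OF refl] add_le_cancel_left le_add1 add_less_cancel_left simp_thms if_True)
    also have "\<dots> = scale_coeffs (\<lambda>_. 2) X + scale_coeffs (\<lambda>_. 4) (var (b + j) * pderiv_var (b + j) X) +
        block_normsq m b * pderiv_var (b + j) (pderiv_var (b + j) X)"
      by (rule poly_mapping_eqI) (simp only: lookup_add lookup_scale_coeffs, simp add: algebra_simps)
    finally show ?thesis .
  qed
  then have "block_lap m b (block_normsq m b * X) =
      (\<Sum>j<m. scale_coeffs (\<lambda>_. 2) X) +
      scale_coeffs (\<lambda>_. 4) (\<Sum>j<m. var (b + j) * pderiv_var (b + j) X) +
      block_normsq m b * block_lap m b X"
    unfolding block_lap_def by (simp add: sum.distrib sum_distrib_left scale_coeffs_sum)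
  also have "\<dots> = block_normsq m b * block_lap m b X +
      scale_coeffs (\<lambda>\<beta>. of_nat (2 * m + 4 * block_deg m b \<beta>)) X"
    by (simp only: block_euler scale_coeffs_sum_weight scale_coeffs_scale_coeffs)
       (rule poly_mapping_eqI, simp add: lookup_add lookup_scale_coeffs algebra_simps)
  finally show ?thesis .
qed

lemma block_lap_add: "block_lap m b (P + Q) = block_lap m b P + block_lap m b Q"
  by (simp add: block_lap_def pderiv_var_add sum.distrib)

lemma block_lap_diff: "block_lap m b (P - Q) = block_lap m b P - block_lap m b Q"
  by (simp add: block_lap_def pderiv_var_diff sum_subtractf)

lemma block_lap_zero [simp]: "block_lap m b 0 = 0"
  by (simp add: block_lap_def)

lemma block_lap_sum: "block_lap m b (\<Sum>j\<in>J. f j) = (\<Sum>j\<in>J. block_lap m b (f j))"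
  by (induction J rule: infinite_finite_induct) (auto simp: block_lap_add)

lemma pderiv_var_block_lap: "pderiv_var i (block_lap m b X) = block_lap m b (pderiv_var i X)"
  by (simp add: block_lap_def pderiv_var_sum pderiv_var_commute)

lemma block_lap_commute: "block_lap m c (block_lap m b X) = block_lap m b (block_lap m c X)"
  unfolding block_lap_def[of m c] by (simp add: pderiv_var_block_lap block_lap_sum[symmetric])

lemma pderiv_var_scale_block_deg:
  "pderiv_var i (scale_coeffs (\<lambda>\<beta>. f (block_deg m b \<beta>)) X) =
    scale_coeffs (\<lambda>\<beta>. f (block_deg m b \<beta> + (if in_block m b i then 1 else 0))) (pderiv_var i X)"
  by (simp add: pderiv_var_scale_coeffs block_deg_add_unit_exp)

lemma var_mult_scale_block_deg:
  "var i * scale_coeffs (\<lambda>\<beta>. f (block_deg m b \<beta> + (if in_block m b i then 1 else 0))) X =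
    scale_coeffs (\<lambda>\<beta>. f (block_deg m b \<beta>)) (var i * X)"
  using var_mult_scale_coeffs[of i "\<lambda>\<beta>. f (block_deg m b \<beta>)" X]
  by (simp add: block_deg_add_unit_exp)

lemma block_lap_scale_block_deg:
  "block_lap m b (scale_coeffs (\<lambda>\<beta>. f (block_deg m b \<beta>)) X) =
    scale_coeffs (\<lambda>\<beta>. f (block_deg m b \<beta> + 2)) (block_lap m b X)"
proof -
  have "pderiv_var (b + j) (pderiv_var (b + j) (scale_coeffs (\<lambda>\<beta>. f (block_deg m b \<beta>)) X)) =
      scale_coeffs (\<lambda>\<beta>. f (block_deg m b \<beta> + 2)) (pderiv_var (b + j) (pderiv_var (b + j) X))"
    if "j < m" for j
    using that pderiv_var_scale_block_deg[of "b + j" f m b X]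
      pderiv_var_scale_block_deg[of "b + j" "\<lambda>d. f (d + 1)" m b "pderiv_var (b + j) X"]
    by (simp add: add.assoc)
  then show ?thesis
    by (simp add: block_lap_def scale_coeffs_sum)
qed

lemma block_lap_scale_other_block_deg:
  assumes "\<forall>j<m. \<not> in_block m b (c + j)"
  shows "block_lap m c (scale_coeffs (\<lambda>\<beta>. f (block_deg m b \<beta>)) X) =
    scale_coeffs (\<lambda>\<beta>. f (block_deg m b \<beta>)) (block_lap m c X)"
proof -
  have "pderiv_var (c + j) (pderiv_var (c + j) (scale_coeffs (\<lambda>\<beta>. f (block_deg m b \<beta>)) X)) =
      scale_coeffs (\<lambda>\<beta>. f (block_deg m b \<beta>)) (pderiv_var (c + j) (pderiv_var (c + j) X))"
    if "j < m" for j
    using that assms pderiv_var_scale_block_deg[of "c + j" f m b X]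
      pderiv_var_scale_block_deg[of "c + j" f m b "pderiv_var (c + j) X"]
    by (simp only: if_False add_0_right)
  then show ?thesis
    by (simp add: block_lap_def scale_coeffs_sum)
qed

lemma scale_block_deg_block_normsq_mult:
  "scale_coeffs (\<lambda>\<beta>. f (block_deg m b \<beta>)) (block_normsq m b * X) =
    block_normsq m b * scale_coeffs (\<lambda>\<beta>. f (block_deg m b \<beta> + 2)) X"
proof -
  have "var (b + j) * (var (b + j) * scale_coeffs (\<lambda>\<beta>. f (block_deg m b \<beta> + 2)) X) =
      scale_coeffs (\<lambda>\<beta>. f (block_deg m b \<beta>)) (var (b + j) * (var (b + j) * X))" if "j < m" for j
    using that var_mult_scale_block_deg[of "b + j" "\<lambda>d. f (d + 1)" m b X]
      var_mult_scale_block_deg[of "b + j" f m b "var (b + j) * X"]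
    by (simp add: add.assoc)
  then show ?thesis
    by (simp add: block_normsq_mult sum_distrib_left scale_coeffs_sum)
qed

lemma scale_block_deg_block_normsq_pow_mult:
  "scale_coeffs (\<lambda>\<beta>. f (block_deg m b \<beta>)) (block_normsq m b ^ k * X) =
    block_normsq m b ^ k * scale_coeffs (\<lambda>\<beta>. f (block_deg m b \<beta> + 2 * k)) X"
proof (induction k arbitrary: f)
  case (Suc k)
  have "scale_coeffs (\<lambda>\<beta>. f (block_deg m b \<beta>)) (block_normsq m b ^ Suc k * X) =
      block_normsq m b * scale_coeffs (\<lambda>\<beta>. f (block_deg m b \<beta> + 2)) (block_normsq m b ^ k * X)"
    by (simp add: mult.assoc scale_block_deg_block_normsq_mult)
  also have "\<dots> = block_normsq m b * (block_normsq m b ^ k *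
      scale_coeffs (\<lambda>\<beta>. f (block_deg m b \<beta> + 2 * k + 2)) X)"
    using Suc[of "\<lambda>d. f (d + 2)"] by simp
  finally show ?case
    by (simp add: mult.assoc add.commute add.left_commute)
qed simp

lemma block_lap_other_block_normsq_mult:
  assumes "\<forall>j<m. \<not> in_block m b (c + j)"
  shows "block_lap m c (block_normsq m b * X) = block_normsq m b * block_lap m c X"
proof -
  have "pderiv_var (c + j) (pderiv_var (c + j) (block_normsq m b * X)) =
      block_normsq m b * pderiv_var (c + j) (pderiv_var (c + j) X)" if "j < m" for j
  proof -
    have "\<not> in_block m b (c + j)"
      using that assms by blast
    then show ?thesis
      by (simp only: pderiv_var_block_normsq_mult if_False add_0)
  qed
  then show ?thesis
    by (simp add: block_lap_def sum_distrib_left)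
qed

lemma block_lap_other_block_normsq_pow_mult:
  assumes "\<forall>j<m. \<not> in_block m b (c + j)"
  shows "block_lap m c (block_normsq m b ^ k * X) = block_normsq m b ^ k * block_lap m c X"
  by (induction k) (simp_all add: mult.assoc block_lap_other_block_normsq_mult[OF assms])

lemma block_lap_block_normsq_pow_mult:
  assumes "block_lap m b H = 0"
  shows "block_lap m b (block_normsq m b ^ Suc k * H) =
    block_normsq m b ^ k *
      scale_coeffs (\<lambda>\<beta>. of_nat (2 * (k + 1) * (2 * block_deg m b \<beta> + 2 * k + m))) H"
proof (induction k)
  case 0
  show ?case
    using block_lap_block_normsq_mult[of m b H] assms
    by simp (rule scale_coeffs_cong, simp add: algebra_simps)
next
  case (Suc k)
  have "block_lap m b (block_normsq m b ^ Suc (Suc k) * H) =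
      block_normsq m b * block_lap m b (block_normsq m b ^ Suc k * H) +
      scale_coeffs (\<lambda>\<beta>. of_nat (2 * m + 4 * block_deg m b \<beta>)) (block_normsq m b ^ Suc k * H)"
    by (simp only: power_Suc mult.assoc block_lap_block_normsq_mult)
  also have "\<dots> = block_normsq m b ^ Suc k *
      (scale_coeffs (\<lambda>\<beta>. of_nat (2 * (k + 1) * (2 * block_deg m b \<beta> + 2 * k + m))) H +
       scale_coeffs (\<lambda>\<beta>. of_nat (2 * m + 4 * (block_deg m b \<beta> + 2 * Suc k))) H)"
    using scale_block_deg_block_normsq_pow_mult[of "\<lambda>d. of_nat (2 * m + 4 * d)" m b "Suc k" H] Suc
    by (simp add: mult.assoc distrib_left)
  also have "\<dots> = block_normsq m b ^ Suc k *
      scale_coeffs (\<lambda>\<beta>. of_nat (2 * (Suc k + 1) * (2 * block_deg m b \<beta> + 2 * Suc k + m))) H"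
    by (simp only: scale_coeffs_add_weight)
       (rule arg_cong[where f = "\<lambda>z. _ * z"], rule scale_coeffs_cong, simp add: algebra_simps)
  finally show ?case .
qed

section \<open>Existence of the Fischer decomposition\<close>

lemma in_vars_iff:
  "in_vars m P \<longleftrightarrow> (\<forall>\<alpha> i. lookup P \<alpha> \<noteq> 0 \<longrightarrow> lookup \<alpha> i \<noteq> 0 \<longrightarrow> i < 2 * m)"
  by (auto simp: in_vars_def in_keys_iff)

lemma in_vars_add: "in_vars m P \<Longrightarrow> in_vars m Q \<Longrightarrow> in_vars m (P + Q)"
  using keys_add[of P Q] unfolding in_vars_def by blast

lemma in_vars_diff: "in_vars m P \<Longrightarrow> in_vars m Q \<Longrightarrow> in_vars m (P - Q)"
  using keys_diff[of P Q] unfolding in_vars_def by blast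

lemma in_vars_zero [simp]: "in_vars m 0"
  by (simp add: in_vars_def)

lemma in_vars_sum: "(\<And>j. j \<in> J \<Longrightarrow> in_vars m (f j)) \<Longrightarrow> in_vars m (\<Sum>j\<in>J. f j)"
  by (induction J rule: infinite_finite_induct) (simp_all add: in_vars_add)

lemma in_vars_scale_coeffs: "in_vars m P \<Longrightarrow> in_vars m (scale_coeffs w P)"
  by (auto simp: in_vars_iff lookup_scale_coeffs)

lemma in_vars_pderiv_var: "in_vars m P \<Longrightarrow> in_vars m (pderiv_var i P)"
  by (auto simp: in_vars_iff lookup_pderiv_var lookup_add)

lemma in_vars_var_mult:
  assumes "i < 2 * m" and "in_vars m P"
  shows "in_vars m (var i * P)"
  unfolding in_vars_iff
proof (intro allI impI)
  fix \<alpha> k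
  assume "lookup (var i * P) \<alpha> \<noteq> 0" and k: "lookup \<alpha> k \<noteq> 0"
  then have P\<alpha>: "lookup P (\<alpha> - unit_exp i) \<noteq> 0"
    by (simp add: lookup_var_mult split: if_splits)
  show "k < 2 * m"
  proof (cases "k = i")
    case False
    then have "lookup (\<alpha> - unit_exp i) k \<noteq> 0"
      using k by (simp add: lookup_minus lookup_unit_exp)
    then show ?thesis
      using assms(2) P\<alpha> unfolding in_vars_iff by blast
  qed (use assms(1) in simp)
qed

lemma in_vars_block_normsq_mult: "b + m \<le> 2 * m \<Longrightarrow> in_vars m P \<Longrightarrow> in_vars m (block_normsq m b * P)"
  unfolding block_normsq_mult by (auto intro!: in_vars_sum in_vars_var_mult)

lemma in_vars_block_normsq_pow_mult:
  "b + m \<le> 2 * m \<Longrightarrow> in_vars m P \<Longrightarrow> in_vars m (block_normsq m b ^ k * P)"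
  by (induction k) (auto simp: mult.assoc intro: in_vars_block_normsq_mult)

lemma in_vars_block_lap: "in_vars m P \<Longrightarrow> in_vars m (block_lap m b P)"
  unfolding block_lap_def by (auto intro!: in_vars_sum in_vars_pderiv_var)

definition block_deg_le :: "nat \<Rightarrow> nat \<Rightarrow> nat \<Rightarrow> cpoly \<Rightarrow> bool" where
  "block_deg_le m b n P \<longleftrightarrow> (\<forall>\<alpha>. lookup P \<alpha> \<noteq> 0 \<longrightarrow> block_deg m b \<alpha> \<le> n)"

lemma block_deg_le_exists: "\<exists>n. block_deg_le m b n P"
proof -
  have "finite (block_deg m b ` Poly_Mapping.keys P)"
    by simp
  then obtain n where "\<forall>d\<in>block_deg m b ` Poly_Mapping.keys P. d \<le> n"
    using finite_nat_set_iff_bounded_le by blast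
  then have "block_deg_le m b n P"
    by (auto simp: block_deg_le_def in_keys_iff)
  then show ?thesis ..
qed

lemma block_deg_le_block_lap:
  assumes "block_deg_le m b n P" and "lookup (block_lap m b P) \<beta> \<noteq> 0"
  shows "block_deg m b \<beta> + 2 \<le> n"
proof -
  from assms(2) obtain j where "j < m" and "lookup (pderiv_var (b + j) (pderiv_var (b + j) P)) \<beta> \<noteq> 0"
    unfolding block_lap_def lookup_sum by (meson lessThan_iff sum.not_neutral_contains_not_neutral)
  then have "lookup P (\<beta> + unit_exp (b + j) + unit_exp (b + j)) \<noteq> 0"
    by (simp add: lookup_pderiv_var)
  then have "block_deg m b (\<beta> + unit_exp (b + j) + unit_exp (b + j)) \<le> n"
    using assms(1) by (simp add: block_deg_le_def)
  then show ?thesis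
    using \<open>j < m\<close> by (simp add: block_deg_add_unit_exp)
qed

definition lap_lift :: "nat \<Rightarrow> nat \<Rightarrow> nat \<Rightarrow> cpoly \<Rightarrow> cpoly" where
  "lap_lift m b j G =
    scale_coeffs (\<lambda>\<beta>. inverse (of_nat (2 * (j + 1) * (2 * block_deg m b \<beta> + 2 * j + m)))) G"

lemma block_lap_lap_lift: "block_lap m b G = 0 \<Longrightarrow> block_lap m b (lap_lift m b j G) = 0"
  using block_lap_scale_block_deg[of m b "\<lambda>d. inverse (of_nat (2 * (j + 1) * (2 * d + 2 * j + m)))" G]
  by (simp add: lap_lift_def)

lemma block_lap_other_lap_lift:
  assumes "\<forall>j<m. \<not> in_block m b (c + j)" and "block_lap m c G = 0"
  shows "block_lap m c (lap_lift m b j G) = 0"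
  using block_lap_scale_other_block_deg[OF assms(1),
      of "\<lambda>d. inverse (of_nat (2 * (j + 1) * (2 * d + 2 * j + m)))" G] assms(2)
  by (simp add: lap_lift_def)

lemma in_vars_lap_lift: "in_vars m G \<Longrightarrow> in_vars m (lap_lift m b j G)"
  by (simp add: lap_lift_def in_vars_scale_coeffs)

lemma block_lap_block_normsq_pow_mult_lap_lift:
  assumes "0 < m" and "block_lap m b G = 0"
  shows "block_lap m b (block_normsq m b ^ Suc j * lap_lift m b j G) = block_normsq m b ^ j * G"
proof -
  let ?c = "\<lambda>\<beta>. of_nat (2 * (j + 1) * (2 * block_deg m b \<beta> + 2 * j + m)) :: complex"
  have "block_lap m b (block_normsq m b ^ Suc j * lap_lift m b j G) =
      block_normsq m b ^ j * scale_coeffs (\<lambda>\<beta>. ?c \<beta> * inverse (?c \<beta>)) G"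
    using block_lap_lap_lift[OF assms(2)]
    by (simp only: block_lap_block_normsq_pow_mult lap_lift_def scale_coeffs_scale_coeffs)
  also have "scale_coeffs (\<lambda>\<beta>. ?c \<beta> * inverse (?c \<beta>)) G = G"
  proof -
    have "?c \<beta> \<noteq> 0" for \<beta>
      using assms(1) by (simp only: of_nat_eq_0_iff) simp
    then show ?thesis
      by (simp only: right_inverse not_False_eq_True scale_coeffs_one)
  qed
  finally show ?thesis .
qed

text \<open>The last conjunct lets a decomposition in the \<open>u\<close>-block preserve harmonicity in \<open>x\<close>.\<close>

definition is_block_fischer_decomp ::
    "nat \<Rightarrow> nat \<Rightarrow> nat \<Rightarrow> cpoly \<Rightarrow> (nat \<Rightarrow> cpoly) \<Rightarrow> nat \<Rightarrow> bool" where
  "is_block_fischer_decomp m b c Q G N \<longleftrightarrow>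
    Q = (\<Sum>a\<le>N. block_normsq m b ^ a * G a) \<and>
    (\<forall>a. in_vars m (G a) \<and> block_lap m b (G a) = 0) \<and> (\<forall>a>N. G a = 0) \<and>
    (block_lap m c Q = 0 \<longrightarrow> (\<forall>a. block_lap m c (G a) = 0))"

text \<open>Each term \<open>|y|^(2a) G\<^sub>a\<close> of a decomposition of the block Laplacian of \<open>Q\<close> is the block
  Laplacian of \<open>|y|^(2a+2) K\<^sub>a\<close>, so \<open>Q - \<Sum>\<^sub>a |y|^(2a+2) K\<^sub>a\<close> is block-harmonic.\<close>

lemma is_block_fischer_decomp_of_block_lap:
  assumes m: "0 < m" and bm: "b + m \<le> 2 * m" and disj: "\<forall>j<m. \<not> in_block m b (c + j)"
    and Q: "in_vars m Q" and "is_block_fischer_decomp m b c (block_lap m b Q) G' N'"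
  shows "\<exists>G N. is_block_fischer_decomp m b c Q G N"
proof -
  have G'_dec: "block_lap m b Q = (\<Sum>a\<le>N'. block_normsq m b ^ a * G' a)"
    and G'_harm: "\<forall>a. in_vars m (G' a) \<and> block_lap m b (G' a) = 0"
    and G'_c: "block_lap m c (block_lap m b Q) = 0 \<longrightarrow> (\<forall>a. block_lap m c (G' a) = 0)"
    using assms(5) by (simp_all add: is_block_fischer_decomp_def)
  define K where "K j = lap_lift m b j (G' j)" for j
  define R where "R = (\<Sum>j\<le>N'. block_normsq m b ^ j * K j)"
  define H where "H = Q - block_normsq m b * R"
  define G where "G a = (if a = 0 then H else if a \<le> Suc N' then K (a - 1) else 0)" for a
  have normsq_R: "block_normsq m b * R = (\<Sum>j\<le>N'. block_normsq m b ^ Suc j * K j)"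
    by (simp add: R_def sum_distrib_left mult.assoc)
  have "(\<Sum>a\<le>Suc N'. block_normsq m b ^ a * G a) =
      G 0 + (\<Sum>a\<le>N'. block_normsq m b ^ Suc a * G (Suc a))"
    unfolding sum.atMost_Suc_shift by simp
  also have "\<dots> = Q"
    using normsq_R by (simp add: G_def H_def)
  finally have G_dec: "Q = (\<Sum>a\<le>Suc N'. block_normsq m b ^ a * G a)" ..
  have K_harm: "in_vars m (K j) \<and> block_lap m b (K j) = 0" for j
    using G'_harm by (simp add: K_def in_vars_lap_lift block_lap_lap_lift)
  have "block_lap m b H = 0"
    using block_lap_block_normsq_pow_mult_lap_lift[OF m] G'_harm
    by (simp add: H_def block_lap_diff normsq_R block_lap_sum K_def G'_dec)
  moreover have "in_vars m H"
    using K_harm bm Q unfolding H_def R_def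
    by (auto intro!: in_vars_diff in_vars_block_normsq_mult in_vars_sum in_vars_block_normsq_pow_mult)
  moreover have "block_lap m c Q = 0 \<longrightarrow> (\<forall>a. block_lap m c (G a) = 0)"
  proof
    assume cQ: "block_lap m c Q = 0"
    then have "block_lap m c (G' a) = 0" for a
      using G'_c by (simp add: block_lap_commute[of m c b])
    then have cK: "block_lap m c (K j) = 0" for j
      using block_lap_other_lap_lift[OF disj] by (simp add: K_def)
    then have "block_lap m c R = 0"
      unfolding R_def block_lap_sum block_lap_other_block_normsq_pow_mult[OF disj] by simp
    then have "block_lap m c H = 0"
      unfolding H_def block_lap_diff block_lap_other_block_normsq_mult[OF disj] cQ by simp
    with cK show "\<forall>a. block_lap m c (G a) = 0"
      by (simp add: G_def)
  qed
  ultimately have "is_block_fischer_decomp m b c Q G (Suc N')"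
    using G_dec K_harm by (auto simp: is_block_fischer_decomp_def G_def)
  then show ?thesis
    by blast
qed

lemma block_fischer_decomposition:
  assumes m: "0 < m" and bm: "b + m \<le> 2 * m" and disj: "\<forall>j<m. \<not> in_block m b (c + j)"
    and "in_vars m Q"
  shows "\<exists>G N. is_block_fischer_decomp m b c Q G N"
proof -
  obtain n where "block_deg_le m b n Q"
    using block_deg_le_exists by blast
  then show ?thesis
    using assms(4)
  proof (induction n arbitrary: Q rule: less_induct)
    case (less n Q)
    show ?case
    proof (cases "block_lap m b Q = 0")
      case True
      then have "is_block_fischer_decomp m b c Q (\<lambda>a. if a = 0 then Q else 0) 0"
        using less.prems(2) by (simp add: is_block_fischer_decomp_def)
      then show ?thesis
        by blast
    next
      case False
      then obtain \<beta> where "lookup (block_lap m b Q) \<beta> \<noteq> 0"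
        using poly_mapping_eqI[of "block_lap m b Q" 0] by auto
      then have "n - 2 < n"
        using block_deg_le_block_lap[OF less.prems(1)] by fastforce
      moreover have "block_deg_le m b (n - 2) (block_lap m b Q)"
        using block_deg_le_block_lap[OF less.prems(1)] unfolding block_deg_le_def by fastforce
      moreover have "in_vars m (block_lap m b Q)"
        using less.prems(2) by (rule in_vars_block_lap)
      ultimately obtain G' N' where "is_block_fischer_decomp m b c (block_lap m b Q) G' N'"
        using less.IH by blast
      then show ?thesis
        using is_block_fischer_decomp_of_block_lap[OF m bm disj less.prems(2)] by blast
    qed
  qed
qed

section \<open>Uniqueness of the Fischer decomposition\<close>

definition fischer_weight :: "(nat \<Rightarrow>\<^sub>0 nat) \<Rightarrow> real" where
  "fischer_weight \<alpha> = (\<Prod>i\<in>Poly_Mapping.keys \<alpha>. fact (lookup \<alpha> i))"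

definition fischer_ip :: "cpoly \<Rightarrow> cpoly \<Rightarrow> complex" where
  "fischer_ip P Q =
    (\<Sum>\<alpha>\<in>Poly_Mapping.keys P. of_real (fischer_weight \<alpha>) * lookup P \<alpha> * cnj (lookup Q \<alpha>))"

lemma fischer_ip_superset:
  assumes "finite S" and "Poly_Mapping.keys P \<subseteq> S"
  shows "fischer_ip P Q = (\<Sum>\<alpha>\<in>S. of_real (fischer_weight \<alpha>) * lookup P \<alpha> * cnj (lookup Q \<alpha>))"
  unfolding fischer_ip_def using assms by (intro sum.mono_neutral_left) (auto simp: in_keys_iff)

lemma fischer_ip_add_left: "fischer_ip (P1 + P2) Q = fischer_ip P1 Q + fischer_ip P2 Q"
proof -
  let ?S = "Poly_Mapping.keys P1 \<union> Poly_Mapping.keys P2"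
  have "fischer_ip (P1 + P2) Q =
      (\<Sum>\<alpha>\<in>?S. of_real (fischer_weight \<alpha>) * lookup (P1 + P2) \<alpha> * cnj (lookup Q \<alpha>))"
    using keys_add[of P1 P2] by (intro fischer_ip_superset) auto
  also have "\<dots> = (\<Sum>\<alpha>\<in>?S. of_real (fischer_weight \<alpha>) * lookup P1 \<alpha> * cnj (lookup Q \<alpha>)) +
      (\<Sum>\<alpha>\<in>?S. of_real (fischer_weight \<alpha>) * lookup P2 \<alpha> * cnj (lookup Q \<alpha>))"
    by (simp add: lookup_add algebra_simps sum.distrib)
  also have "\<dots> = fischer_ip P1 Q + fischer_ip P2 Q"
    by (simp add: fischer_ip_superset[symmetric])
  finally show ?thesis .
qed

lemma fischer_ip_zero_left [simp]: "fischer_ip 0 Q = 0"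
  by (simp add: fischer_ip_def)

lemma fischer_ip_zero_right [simp]: "fischer_ip P 0 = 0"
  by (simp add: fischer_ip_def)

lemma fischer_ip_sum_left: "fischer_ip (\<Sum>j\<in>J. f j) Q = (\<Sum>j\<in>J. fischer_ip (f j) Q)"
  by (induction J rule: infinite_finite_induct) (auto simp: fischer_ip_add_left)

lemma fischer_ip_add_right: "fischer_ip P (Q1 + Q2) = fischer_ip P Q1 + fischer_ip P Q2"
  by (simp add: fischer_ip_def lookup_add algebra_simps sum.distrib)

lemma fischer_ip_sum_right: "fischer_ip P (\<Sum>j\<in>J. f j) = (\<Sum>j\<in>J. fischer_ip P (f j))"
  by (induction J rule: infinite_finite_induct) (auto simp: fischer_ip_add_right)

lemma fischer_weight_superset:
  "finite S \<Longrightarrow> Poly_Mapping.keys \<alpha> \<subseteq> S \<Longrightarrow> fischer_weight \<alpha> = (\<Prod>i\<in>S. fact (lookup \<alpha> i))"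
  unfolding fischer_weight_def by (rule prod.mono_neutral_left) (auto simp: in_keys_iff)

lemma fischer_weight_pos: "0 < fischer_weight \<alpha>"
  unfolding fischer_weight_def by (rule prod_pos) simp

lemma fischer_weight_diff_unit_exp:
  assumes "0 < lookup \<alpha> j"
  shows "fischer_weight \<alpha> = fischer_weight (\<alpha> - unit_exp j) * of_nat (lookup \<alpha> j)"
proof -
  let ?S = "Poly_Mapping.keys \<alpha>"
  have jS: "j \<in> ?S"
    using assms by (simp add: in_keys_iff)
  have "Poly_Mapping.keys (\<alpha> - unit_exp j) \<subseteq> ?S"
    by (auto simp: in_keys_iff lookup_minus lookup_unit_exp split: if_splits)
  then have "fischer_weight (\<alpha> - unit_exp j) = (\<Prod>i\<in>?S. fact (lookup (\<alpha> - unit_exp j) i))"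
    by (intro fischer_weight_superset) simp_all
  also have "\<dots> = fact (lookup \<alpha> j - 1) * (\<Prod>i\<in>?S - {j}. fact (lookup \<alpha> i))"
    by (subst prod.remove[OF _ jS]) (auto simp: lookup_minus lookup_unit_exp intro!: prod.cong)
  moreover have "fischer_weight \<alpha> = fact (lookup \<alpha> j) * (\<Prod>i\<in>?S - {j}. fact (lookup \<alpha> i))"
    unfolding fischer_weight_def by (subst prod.remove[OF _ jS]) auto
  moreover have "(fact (lookup \<alpha> j) :: real) = of_nat (lookup \<alpha> j) * fact (lookup \<alpha> j - 1)"
    using assms by (simp add: fact_reduce)
  ultimately show ?thesis
    by simp
qed

lemma fischer_ip_var_mult: "fischer_ip P (var j * Q) = fischer_ip (pderiv_var j P) Q"
proof -
  let ?A = "{\<alpha>\<in>Poly_Mapping.keys P. 0 < lookup \<alpha> j}"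
  let ?f = "\<lambda>\<alpha>. \<alpha> - unit_exp j"
  have inj: "inj_on ?f ?A"
  proof (rule inj_onI)
    fix \<alpha> \<alpha>' assume "\<alpha> \<in> ?A" "\<alpha>' \<in> ?A" "?f \<alpha> = ?f \<alpha>'"
    then show "\<alpha> = \<alpha>'"
      by (metis (no_types, lifting) diff_unit_exp_add_cancel mem_Collect_eq)
  qed
  have "fischer_ip P (var j * Q) =
      (\<Sum>\<alpha>\<in>?A. of_real (fischer_weight \<alpha>) * lookup P \<alpha> * cnj (lookup Q (\<alpha> - unit_exp j)))"
    unfolding fischer_ip_def lookup_var_mult by (rule sum.mono_neutral_cong_right) auto
  also have "\<dots> = (\<Sum>\<alpha>\<in>?A. of_real (fischer_weight (?f \<alpha>)) *
      (of_nat (lookup (?f \<alpha>) j + 1) * lookup P (?f \<alpha> + unit_exp j)) * cnj (lookup Q (?f \<alpha>)))"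
  proof (intro sum.cong refl)
    fix \<alpha> assume \<alpha>: "\<alpha> \<in> ?A"
    then have "lookup (\<alpha> - unit_exp j) j + 1 = lookup \<alpha> j"
      by (simp add: lookup_minus lookup_unit_exp)
    then show "of_real (fischer_weight \<alpha>) * lookup P \<alpha> * cnj (lookup Q (\<alpha> - unit_exp j)) =
        of_real (fischer_weight (?f \<alpha>)) *
        (of_nat (lookup (?f \<alpha>) j + 1) * lookup P (?f \<alpha> + unit_exp j)) * cnj (lookup Q (?f \<alpha>))"
      using \<alpha> diff_unit_exp_add_cancel[of \<alpha> j] fischer_weight_diff_unit_exp[of \<alpha> j] by simp
  qed
  also have "\<dots> = (\<Sum>\<beta>\<in>?f ` ?A. of_real (fischer_weight \<beta>) *
      (of_nat (lookup \<beta> j + 1) * lookup P (\<beta> + unit_exp j)) * cnj (lookup Q \<beta>))"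
    by (simp add: sum.reindex[OF inj])
  also have "\<dots> = fischer_ip (pderiv_var j P) Q"
  proof -
    have "Poly_Mapping.keys (pderiv_var j P) \<subseteq> ?f ` ?A"
    proof
      fix \<beta> assume "\<beta> \<in> Poly_Mapping.keys (pderiv_var j P)"
      then have "\<beta> + unit_exp j \<in> ?A"
        by (simp add: in_keys_iff lookup_pderiv_var lookup_add lookup_unit_exp)
      moreover have "\<beta> = ?f (\<beta> + unit_exp j)"
        by (simp only: add_unit_exp_diff_cancel)
      ultimately show "\<beta> \<in> ?f ` ?A"
        by blast
    qed
    then show ?thesis
      using fischer_ip_superset[of "?f ` ?A" "pderiv_var j P" Q] by (simp add: lookup_pderiv_var)
  qed
  finally show ?thesis .
qed

lemma fischer_ip_self_eq_0:
  assumes "fischer_ip P P = 0"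
  shows "P = 0"
proof (rule ccontr)
  assume "P \<noteq> 0"
  then have "Poly_Mapping.keys P \<noteq> {}"
    by simp
  moreover have "0 < fischer_weight \<alpha> * (cmod (lookup P \<alpha>))\<^sup>2" if "\<alpha> \<in> Poly_Mapping.keys P" for \<alpha>
    using that fischer_weight_pos[of \<alpha>] by (simp add: in_keys_iff)
  ultimately have "0 < (\<Sum>\<alpha>\<in>Poly_Mapping.keys P. fischer_weight \<alpha> * (cmod (lookup P \<alpha>))\<^sup>2)"
    by (intro sum_pos) simp_all
  moreover have "fischer_ip P P =
      of_real (\<Sum>\<alpha>\<in>Poly_Mapping.keys P. fischer_weight \<alpha> * (cmod (lookup P \<alpha>))\<^sup>2)"
    unfolding fischer_ip_def of_real_sum
    by (intro sum.cong refl) (metis complex_norm_square mult.assoc of_real_mult)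
  ultimately show False
    using assms by (metis of_real_eq_0_iff order_less_irrefl)
qed

lemma fischer_ip_block_normsq_mult:
  "fischer_ip D (block_normsq m b * R) = fischer_ip (block_lap m b D) R"
  unfolding block_normsq_mult fischer_ip_sum_right fischer_ip_var_mult block_lap_def fischer_ip_sum_left ..

lemma harmonic_in_normsq_ideal_eq_0:
  assumes "block_lap m b D = 0" and "block_lap m c D = 0"
    and "D = block_normsq m b * R1 + block_normsq m c * R2"
  shows "D = 0"
proof -
  have "fischer_ip D D = fischer_ip D (block_normsq m b * R1) + fischer_ip D (block_normsq m c * R2)"
    using assms(3) by (metis fischer_ip_add_right)
  also have "\<dots> = 0"
    by (simp add: fischer_ip_block_normsq_mult assms(1,2))
  finally show ?thesis
    by (rule fischer_ip_self_eq_0)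
qed

section \<open>The projection \<open>\<pi>\<^sub>s\<close>\<close>

lemma harm_iff: "harm m P \<longleftrightarrow> in_vars m P \<and> block_lap m 0 P = 0 \<and> block_lap m m P = 0"
  by (simp add: harm_def lap_x_eq lap_u_eq)

lemma harm_in_vars: "harm m P \<Longrightarrow> in_vars m P"
  by (simp add: harm_def)

lemma in_vars_normsq_x_mult: "in_vars m R \<Longrightarrow> in_vars m (normsq_x m * R)"
  by (simp add: normsq_x_eq in_vars_block_normsq_mult)

lemma in_vars_normsq_u_mult: "in_vars m R \<Longrightarrow> in_vars m (normsq_u m * R)"
  by (simp add: normsq_u_eq in_vars_block_normsq_mult)

lemma harm_zero [simp]: "harm m 0"
  by (simp add: harm_iff)

lemma fischer_decomposition:
  assumes m: "0 < m" and Q: "in_vars m Q"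
  shows "\<exists>N Hs. (\<forall>a b. harm m (Hs a b)) \<and>
    Q = (\<Sum>a\<le>N. \<Sum>b\<le>N. normsq_x m ^ a * normsq_u m ^ b * Hs a b)"
proof -
  obtain G N where G_dec: "Q = (\<Sum>a\<le>N. block_normsq m 0 ^ a * G a)"
    and G_harm: "\<forall>a. in_vars m (G a) \<and> block_lap m 0 (G a) = 0" and G_0: "\<forall>a>N. G a = 0"
    using block_fischer_decomposition[of m 0 m Q] m Q by (auto simp: is_block_fischer_decomp_def)
  have "\<exists>H M. G a = (\<Sum>b\<le>M. block_normsq m m ^ b * H b) \<and> (\<forall>b. harm m (H b)) \<and> (\<forall>b>M. H b = 0)"
    for a
    using block_fischer_decomposition[of m m 0 "G a"] m G_harm
    by (simp add: harm_iff is_block_fischer_decomp_def) blast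
  then obtain H M where H:
    "\<And>a. G a = (\<Sum>b\<le>M a. block_normsq m m ^ b * H a b) \<and> (\<forall>b. harm m (H a b)) \<and> (\<forall>b>M a. H a b = 0)"
    by metis
  define N' where "N' = N + (\<Sum>a\<le>N. M a)"
  define Hs where "Hs a b = (if a \<le> N then H a b else 0)" for a b
  have G_eq: "G a = (\<Sum>b\<le>N'. block_normsq m m ^ b * Hs a b)" for a
  proof (cases "a \<le> N")
    case True
    then have "M a \<le> N'"
      unfolding N'_def using member_le_sum[of a "{..N}" M] by simp
    then have "(\<Sum>b\<le>M a. block_normsq m m ^ b * H a b) = (\<Sum>b\<le>N'. block_normsq m m ^ b * H a b)"
      using H[of a] by (intro sum.mono_neutral_left) auto
    then show ?thesis
      using True H[of a] by (simp add: Hs_def)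
  qed (use G_0 in \<open>simp add: Hs_def\<close>)
  have "Q = (\<Sum>a\<le>N'. block_normsq m 0 ^ a * G a)"
    unfolding G_dec using G_0 by (intro sum.mono_neutral_left) (auto simp: N'_def)
  also have "\<dots> = (\<Sum>a\<le>N'. \<Sum>b\<le>N'. normsq_x m ^ a * normsq_u m ^ b * Hs a b)"
    by (simp add: G_eq sum_distrib_left mult.assoc normsq_x_eq normsq_u_eq)
  finally have "Q = (\<Sum>a\<le>N'. \<Sum>b\<le>N'. normsq_x m ^ a * normsq_u m ^ b * Hs a b)" .
  moreover have "\<forall>a b. harm m (Hs a b)"
    using H by (simp add: Hs_def)
  ultimately show ?thesis
    by blast
qed

lemma double_power_sum_split:
  fixes x y :: "'a::comm_ring_1"
  shows "\<exists>R1 R2. (\<Sum>a\<le>N. \<Sum>b\<le>N. x ^ a * y ^ b * H a b) = H 0 0 + x * R1 + y * R2"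
proof -
  have "(\<Sum>a\<le>N. \<Sum>b\<le>N. x ^ a * y ^ b * H a b) =
      H 0 0 + x * (\<Sum>a<N. \<Sum>b\<le>N. x ^ a * y ^ b * H (Suc a) b) + y * (\<Sum>b<N. y ^ b * H 0 (Suc b))"
    by (simp add: sum.atMost_shift sum_distrib_left algebra_simps)
  then show ?thesis
    by blast
qed

lemma harm_part_unique:
  assumes "harm m H1" and "harm m H2"
    and "H1 + normsq_x m * R1 + normsq_u m * R2 = H2 + normsq_x m * R1' + normsq_u m * R2'"
  shows "H1 = H2"
proof -
  have "H1 - H2 = block_normsq m 0 * (R1' - R1) + block_normsq m m * (R2' - R2)"
    using assms(3) unfolding normsq_x_eq normsq_u_eq by (simp add: algebra_simps)
  moreover have "block_lap m 0 (H1 - H2) = 0" and "block_lap m m (H1 - H2) = 0"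
    using assms(1,2) by (simp_all add: harm_iff block_lap_diff)
  ultimately show ?thesis
    using harmonic_in_normsq_ideal_eq_0 by (metis eq_iff_diff_eq_0)
qed

lemma pi_s_decomposition:
  assumes "0 < m" and "in_vars m Q"
  shows "harm m (pi_s m Q) \<and> (\<exists>R1 R2. Q = pi_s m Q + normsq_x m * R1 + normsq_u m * R2)"
proof -
  obtain N Hs where Hs: "\<forall>a b. harm m (Hs a b)"
    and Q: "Q = (\<Sum>a\<le>N. \<Sum>b\<le>N. normsq_x m ^ a * normsq_u m ^ b * Hs a b)"
    using fischer_decomposition[OF assms] by blast
  obtain R1 R2 where R: "Q = Hs 0 0 + normsq_x m * R1 + normsq_u m * R2"
    using double_power_sum_split[where x = "normsq_x m" and y = "normsq_u m" and N = N and H = Hs] Q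
    by metis
  have "pi_s m Q = Hs 0 0"
    unfolding pi_s_def
  proof (rule the_equality)
    fix H
    assume "\<exists>N Hs'. (\<forall>a b. harm m (Hs' a b)) \<and>
      Q = (\<Sum>a\<le>N. \<Sum>b\<le>N. normsq_x m ^ a * normsq_u m ^ b * Hs' a b) \<and> H = Hs' 0 0"
    then obtain N' Hs' where Hs': "\<forall>a b. harm m (Hs' a b)"
      and Q': "Q = (\<Sum>a\<le>N'. \<Sum>b\<le>N'. normsq_x m ^ a * normsq_u m ^ b * Hs' a b)"
      and "H = Hs' 0 0"
      by blast
    moreover obtain R1' R2' where "Q = Hs' 0 0 + normsq_x m * R1' + normsq_u m * R2'"
      using double_power_sum_split[where x = "normsq_x m" and y = "normsq_u m" and N = N' and H = Hs'] Q'
      by metis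
    ultimately show "H = Hs 0 0"
      using harm_part_unique[of m "Hs' 0 0" "Hs 0 0" R1' R2' R1 R2] Hs R by simp
  qed (use Hs Q in \<open>intro exI[of _ N] exI[of _ Hs], blast\<close>)
  then show ?thesis
    using Hs R by auto
qed

lemma pi_s_eqI:
  assumes "0 < m" and "in_vars m Q" and "harm m H"
    and "Q = H + normsq_x m * R1 + normsq_u m * R2"
  shows "pi_s m Q = H"
proof -
  obtain R1' R2' where "Q = pi_s m Q + normsq_x m * R1' + normsq_u m * R2'" and "harm m (pi_s m Q)"
    using pi_s_decomposition[OF assms(1,2)] by blast
  then show ?thesis
    using harm_part_unique[of m "pi_s m Q" H R1' R2' R1 R2] assms(3,4) by auto
qed

lemma harm_pi_s: "0 < m \<Longrightarrow> in_vars m Q \<Longrightarrow> harm m (pi_s m Q)"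
  using pi_s_decomposition by blast

context
  fixes m :: nat
  assumes m: "0 < m"
begin

lemma pi_s_harm: "harm m H \<Longrightarrow> pi_s m H = H"
  by (rule pi_s_eqI[OF m, of H H 0 0]) (auto simp: harm_def)

lemma pi_s_add:
  assumes "in_vars m Q1" and "in_vars m Q2"
  shows "pi_s m (Q1 + Q2) = pi_s m Q1 + pi_s m Q2"
proof -
  obtain A1 B1 where 1: "Q1 = pi_s m Q1 + normsq_x m * A1 + normsq_u m * B1" "harm m (pi_s m Q1)"
    using pi_s_decomposition[OF m assms(1)] by blast
  obtain A2 B2 where 2: "Q2 = pi_s m Q2 + normsq_x m * A2 + normsq_u m * B2" "harm m (pi_s m Q2)"
    using pi_s_decomposition[OF m assms(2)] by blast
  show ?thesis
  proof (rule pi_s_eqI[OF m _ _, of _ _ "A1 + A2" "B1 + B2"])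
    show "in_vars m (Q1 + Q2)"
      using assms by (rule in_vars_add)
    show "harm m (pi_s m Q1 + pi_s m Q2)"
      using 1(2) 2(2) by (simp add: harm_iff in_vars_add block_lap_add)
    show "Q1 + Q2 = pi_s m Q1 + pi_s m Q2 + normsq_x m * (A1 + A2) + normsq_u m * (B1 + B2)"
      by (subst 1(1), subst 2(1)) (simp add: algebra_simps)
  qed
qed

lemma pi_s_diff:
  assumes "in_vars m Q1" and "in_vars m Q2"
  shows "pi_s m (Q1 - Q2) = pi_s m Q1 - pi_s m Q2"
  using pi_s_add[of "Q1 - Q2" Q2] assms by (simp add: in_vars_diff)

lemma pi_s_normsq_x_mult: "in_vars m R \<Longrightarrow> pi_s m (normsq_x m * R) = 0"
  by (rule pi_s_eqI[OF m, of _ 0 R 0]) (simp_all add: in_vars_normsq_x_mult)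

lemma pi_s_normsq_u_mult: "in_vars m R \<Longrightarrow> pi_s m (normsq_u m * R) = 0"
  by (rule pi_s_eqI[OF m, of _ 0 0 R]) (simp_all add: in_vars_normsq_u_mult)

end

section \<open>Functions of \<open>H\<^sub>x\<close> and \<open>H\<^sub>u\<close>\<close>

lemma lookup_eig_apply:
  "lookup (eig_apply m F P) \<beta> = F (block_deg m 0 \<beta>) (block_deg m m \<beta>) * lookup P \<beta>"
proof -
  let ?I = "(\<lambda>\<alpha>. (xdeg m \<alpha>, udeg m \<alpha>)) ` Poly_Mapping.keys P"
  let ?d = "(xdeg m \<beta>, udeg m \<beta>)"
  have bicomp: "lookup (bicomp m p q P) \<beta> =
      (if xdeg m \<beta> = p \<and> udeg m \<beta> = q then lookup P \<beta> else 0)" for p q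
  proof -
    have "lookup (bicomp m p q P) \<beta> = (\<Sum>\<alpha>\<in>{\<alpha>\<in>Poly_Mapping.keys P. xdeg m \<alpha> = p \<and> udeg m \<alpha> = q}.
        if \<alpha> = \<beta> then lookup P \<alpha> else 0)"
      unfolding bicomp_def lookup_sum by (intro sum.cong refl) (simp add: lookup_single_eq_if)
    then show ?thesis
      by (auto simp: sum.delta in_keys_iff)
  qed
  define g where "g d = F (fst d) (snd d) * (if ?d = d then lookup P \<beta> else 0)" for d
  have "lookup (eig_apply m F P) \<beta> = (\<Sum>d\<in>?I. g d)"
    unfolding eig_apply_def lookup_sum
    by (intro sum.cong refl) (auto simp: g_def lookup_cconst_mult bicomp split: prod.split)
  also have "\<dots> = (\<Sum>d\<in>?I. if ?d = d then g ?d else 0)"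
    by (intro sum.cong refl) (simp add: g_def)
  also have "\<dots> = F (xdeg m \<beta>) (udeg m \<beta>) * lookup P \<beta>"
    by (simp only: sum.delta'[OF finite_imageI[OF finite_keys]]) (auto simp: g_def in_keys_iff)
  finally show ?thesis
    by (simp add: xdeg_eq udeg_eq)
qed

lemma eig_apply_eq_scale_coeffs:
  "eig_apply m F P = scale_coeffs (\<lambda>\<beta>. F (block_deg m 0 \<beta>) (block_deg m m \<beta>)) P"
  by (rule poly_mapping_eqI) (simp add: lookup_eig_apply lookup_scale_coeffs)

lemma eig_apply_eig_apply: "eig_apply m F (eig_apply m G P) = eig_apply m (\<lambda>p q. F p q * G p q) P"
  by (simp add: eig_apply_eq_scale_coeffs scale_coeffs_scale_coeffs)

lemma eig_apply_diff_fun: "eig_apply m F P - eig_apply m G P = eig_apply m (\<lambda>p q. F p q - G p q) P"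
  by (simp add: eig_apply_eq_scale_coeffs scale_coeffs_diff_weight)

lemma eig_apply_uminus: "- eig_apply m F P = eig_apply m (\<lambda>p q. - F p q) P"
  by (rule poly_mapping_eqI) (simp add: lookup_eig_apply)

lemma eig_apply_add: "eig_apply m F (P + Q) = eig_apply m F P + eig_apply m F Q"
  by (simp add: eig_apply_eq_scale_coeffs scale_coeffs_add)

lemma eig_apply_zero [simp]: "eig_apply m F 0 = 0"
  by (simp add: eig_apply_eq_scale_coeffs)

lemma eig_apply_sum: "eig_apply m F (\<Sum>j\<in>J. f j) = (\<Sum>j\<in>J. eig_apply m F (f j))"
  by (simp add: eig_apply_eq_scale_coeffs scale_coeffs_sum)

lemma numeral_mult_eq_eig_apply: "(numeral n :: cpoly) * P = eig_apply m (\<lambda>p q. numeral n) P"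
  by (simp add: numeral_mult_eq_scale_coeffs eig_apply_eq_scale_coeffs)

lemma pderiv_var_eig_apply:
  "pderiv_var i (eig_apply m F X) =
    eig_apply m
      (\<lambda>p q. F (p + (if in_block m 0 i then 1 else 0)) (q + (if in_block m m i then 1 else 0)))
      (pderiv_var i X)"
  by (simp add: eig_apply_eq_scale_coeffs pderiv_var_scale_coeffs block_deg_add_unit_exp)

lemma var_mult_eig_apply:
  "var i * eig_apply m
      (\<lambda>p q. F (p + (if in_block m 0 i then 1 else 0)) (q + (if in_block m m i then 1 else 0))) X =
    eig_apply m F (var i * X)"
  using var_mult_scale_coeffs[of i "\<lambda>\<beta>. F (block_deg m 0 \<beta>) (block_deg m m \<beta>)" X]
  by (simp add: eig_apply_eq_scale_coeffs block_deg_add_unit_exp)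

lemma pderiv_x_eig_apply:
  "j < m \<Longrightarrow> pderiv_var j (eig_apply m F X) = eig_apply m (\<lambda>p q. F (p + 1) q) (pderiv_var j X)"
  using pderiv_var_eig_apply[of j m F X] by simp

lemma pderiv_u_eig_apply:
  "j < m \<Longrightarrow> pderiv_var (m + j) (eig_apply m F X) =
    eig_apply m (\<lambda>p q. F p (q + 1)) (pderiv_var (m + j) X)"
  using pderiv_var_eig_apply[of "m + j" m F X] by simp

lemma var_x_mult_eig_apply:
  "j < m \<Longrightarrow> var j * eig_apply m (\<lambda>p q. F (p + 1) q) X = eig_apply m F (var j * X)"
  using var_mult_eig_apply[of j m F X] by simp

lemma var_u_mult_eig_apply:
  "j < m \<Longrightarrow> var (m + j) * eig_apply m (\<lambda>p q. F p (q + 1)) X = eig_apply m F (var (m + j) * X)"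
  using var_mult_eig_apply[of "m + j" m F X] by simp

lemma block_lap_x_eig_apply:
  "block_lap m 0 (eig_apply m F X) = eig_apply m (\<lambda>p q. F (p + 2) q) (block_lap m 0 X)"
proof -
  have "pderiv_var j (pderiv_var j (eig_apply m F X)) =
      eig_apply m (\<lambda>p q. F (p + 2) q) (pderiv_var j (pderiv_var j X))" if "j < m" for j
    using that pderiv_x_eig_apply[of j m F X] pderiv_x_eig_apply[of j m "\<lambda>p q. F (p + 1) q"]
    by (simp add: add.assoc)
  then show ?thesis
    by (simp add: block_lap_def eig_apply_sum)
qed

lemma block_lap_u_eig_apply:
  "block_lap m m (eig_apply m F X) = eig_apply m (\<lambda>p q. F p (q + 2)) (block_lap m m X)"
proof -
  have "pderiv_var (m + j) (pderiv_var (m + j) (eig_apply m F X)) =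
      eig_apply m (\<lambda>p q. F p (q + 2)) (pderiv_var (m + j) (pderiv_var (m + j) X))" if "j < m" for j
    using that pderiv_u_eig_apply[of j m F X] pderiv_u_eig_apply[of j m "\<lambda>p q. F p (q + 1)"]
    by (simp add: add.assoc)
  then show ?thesis
    by (simp add: block_lap_def eig_apply_sum)
qed

lemma eig_apply_normsq_x_mult:
  "eig_apply m F (normsq_x m * X) = normsq_x m * eig_apply m (\<lambda>p q. F (p + 2) q) X"
proof -
  have "var j * (var j * eig_apply m (\<lambda>p q. F (p + 2) q) X) = eig_apply m F (var j * (var j * X))"
    if "j < m" for j
    using that var_x_mult_eig_apply[of j m F] var_x_mult_eig_apply[of j m "\<lambda>p q. F (p + 1) q"]
    by (simp add: add.assoc)
  then show ?thesis
    by (simp add: normsq_x_eq block_normsq_mult eig_apply_sum sum_distrib_left)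
qed

lemma eig_apply_normsq_u_mult:
  "eig_apply m F (normsq_u m * X) = normsq_u m * eig_apply m (\<lambda>p q. F p (q + 2)) X"
proof -
  have "var (m + j) * (var (m + j) * eig_apply m (\<lambda>p q. F p (q + 2)) X) =
      eig_apply m F (var (m + j) * (var (m + j) * X))" if "j < m" for j
    using that var_u_mult_eig_apply[of j m F] var_u_mult_eig_apply[of j m "\<lambda>p q. F p (q + 1)"]
    by (simp add: add.assoc)
  then show ?thesis
    by (simp add: normsq_u_eq block_normsq_mult eig_apply_sum sum_distrib_left)
qed

lemma ux_mult_eig_apply:
  "ux m * eig_apply m (\<lambda>p q. F (p + 1) (q + 1)) Y = eig_apply m F (ux m * Y)"
proof -
  have "var (m + j) * (var j * eig_apply m (\<lambda>p q. F (p + 1) (q + 1)) Y) =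
      eig_apply m F (var (m + j) * (var j * Y))" if "j < m" for j
    using that var_x_mult_eig_apply[of j m "\<lambda>p q. F p (q + 1)" Y]
      var_u_mult_eig_apply[of j m F "var j * Y"]
    by simp
  then show ?thesis
    by (simp add: ux_def sum_distrib_right mult.assoc eig_apply_sum)
qed

lemma in_vars_eig_apply: "in_vars m H \<Longrightarrow> in_vars m (eig_apply m F H)"
  by (simp add: eig_apply_eq_scale_coeffs in_vars_scale_coeffs)

lemma harm_eig_apply: "harm m H \<Longrightarrow> harm m (eig_apply m F H)"
  by (simp add: harm_iff block_lap_x_eig_apply block_lap_u_eig_apply in_vars_eig_apply)

lemma pi_s_eig_apply:
  assumes "0 < m" and "in_vars m Q"
  shows "pi_s m (eig_apply m F Q) = eig_apply m F (pi_s m Q)"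
proof -
  obtain A B where Q: "Q = pi_s m Q + normsq_x m * A + normsq_u m * B" and "harm m (pi_s m Q)"
    using pi_s_decomposition[OF assms] by blast
  show ?thesis
  proof (rule pi_s_eqI[OF assms(1)])
    show "in_vars m (eig_apply m F Q)"
      using assms(2) by (rule in_vars_eig_apply)
    show "harm m (eig_apply m F (pi_s m Q))"
      using \<open>harm m (pi_s m Q)\<close> by (rule harm_eig_apply)
    show "eig_apply m F Q = eig_apply m F (pi_s m Q) +
        normsq_x m * eig_apply m (\<lambda>p q. F (p + 2) q) A + normsq_u m * eig_apply m (\<lambda>p q. F p (q + 2)) B"
      by (subst Q) (simp add: eig_apply_add eig_apply_normsq_x_mult eig_apply_normsq_u_mult)
  qed
qed

section \<open>The operators \<open>\<langle>x,\<partial>\<^sub>u\<rangle>\<close>, \<open>\<langle>u,\<partial>\<^sub>x\<rangle>\<close> and \<open>\<langle>\<partial>\<^sub>u,\<partial>\<^sub>x\<rangle>\<close>\<close>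

lemma x_du_zero [simp]: "x_du m 0 = 0"
  by (simp add: x_du_def)

lemma u_dx_zero [simp]: "u_dx m 0 = 0"
  by (simp add: u_dx_def)

lemma x_du_diff: "x_du m (P - Q) = x_du m P - x_du m Q"
  by (simp add: x_du_def pderiv_var_diff right_diff_distrib sum_subtractf)

lemma u_dx_diff: "u_dx m (P - Q) = u_dx m P - u_dx m Q"
  by (simp add: u_dx_def pderiv_var_diff right_diff_distrib sum_subtractf)

lemma ux_mult_eq_sum: "ux m * Y = (\<Sum>j<m. var (m + j) * (var j * Y))"
  by (simp add: ux_def sum_distrib_right mult.assoc)

lemma x_du_normsq_u_mult: "x_du m (normsq_u m * Y) = normsq_u m * x_du m Y + 2 * (ux m * Y)"
proof -
  have "var j * pderiv_var (m + j) (normsq_u m * Y) =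
      normsq_u m * (var j * pderiv_var (m + j) Y) + 2 * (var (m + j) * (var j * Y))" if "j < m" for j
    using that pderiv_var_block_normsq_mult[of "m + j" m m Y]
    by (simp add: normsq_u_eq algebra_simps)
  then show ?thesis
    by (simp add: x_du_def ux_mult_eq_sum sum.distrib sum_distrib_left)
qed

lemma u_dx_normsq_x_mult: "u_dx m (normsq_x m * Y) = normsq_x m * u_dx m Y + 2 * (ux m * Y)"
proof -
  have "var (m + j) * pderiv_var j (normsq_x m * Y) =
      normsq_x m * (var (m + j) * pderiv_var j Y) + 2 * (var (m + j) * (var j * Y))" if "j < m" for j
    using that pderiv_var_block_normsq_mult[of j m 0 Y]
    by (simp add: normsq_x_eq algebra_simps)
  then show ?thesis
    by (simp add: u_dx_def ux_mult_eq_sum sum.distrib sum_distrib_left)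
qed

lemma x_du_u_dx_expand:
  "x_du m (u_dx m P) = (\<Sum>j<m. var j * pderiv_var j P) +
    (\<Sum>j<m. \<Sum>k<m. var j * (var (m + k) * pderiv_var (m + j) (pderiv_var k P)))"
proof -
  have "var j * pderiv_var (m + j) (u_dx m P) = var j * pderiv_var j P +
      (\<Sum>k<m. var j * (var (m + k) * pderiv_var (m + j) (pderiv_var k P)))" if "j < m" for j
  proof -
    have "pderiv_var (m + j) (u_dx m P) = (\<Sum>k<m. if j = k then pderiv_var k P else 0) +
        (\<Sum>k<m. var (m + k) * pderiv_var (m + j) (pderiv_var k P))"
      by (simp add: u_dx_def pderiv_var_sum pderiv_var_mult sum.distrib)
    also have "(\<Sum>k<m. if j = k then pderiv_var k P else 0) = pderiv_var j P"
      using that by (simp add: sum.delta)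
    finally show ?thesis
      by (simp add: distrib_left sum_distrib_left)
  qed
  then show ?thesis
    by (simp add: x_du_def sum.distrib)
qed

lemma u_dx_x_du_expand:
  "u_dx m (x_du m P) = (\<Sum>j<m. var (m + j) * pderiv_var (m + j) P) +
    (\<Sum>k<m. \<Sum>j<m. var (m + k) * (var j * pderiv_var k (pderiv_var (m + j) P)))"
proof -
  have "var (m + k) * pderiv_var k (x_du m P) = var (m + k) * pderiv_var (m + k) P +
      (\<Sum>j<m. var (m + k) * (var j * pderiv_var k (pderiv_var (m + j) P)))" if "k < m" for k
  proof -
    have "pderiv_var k (x_du m P) = (\<Sum>j<m. if k = j then pderiv_var (m + j) P else 0) +
        (\<Sum>j<m. var j * pderiv_var k (pderiv_var (m + j) P))"
      by (simp add: x_du_def pderiv_var_sum pderiv_var_mult sum.distrib)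
    also have "(\<Sum>j<m. if k = j then pderiv_var (m + j) P else 0) = pderiv_var (m + k) P"
      using that by (simp add: sum.delta)
    finally show ?thesis
      by (simp add: distrib_left sum_distrib_left)
  qed
  then show ?thesis
    by (simp add: u_dx_def sum.distrib)
qed

lemma x_du_u_dx_commutator:
  "x_du m (u_dx m P) - u_dx m (x_du m P) = - eig_apply m (\<lambda>p q. eig_Hx m p - eig_Hu m q) P"
proof -
  have "(\<Sum>j<m. \<Sum>k<m. var j * (var (m + k) * pderiv_var (m + j) (pderiv_var k P))) =
      (\<Sum>k<m. \<Sum>j<m. var (m + k) * (var j * pderiv_var k (pderiv_var (m + j) P)))"
    by (subst sum.swap) (simp add: mult.left_commute pderiv_var_commute)
  moreover have "(\<Sum>j<m. var j * pderiv_var j P) = scale_coeffs (\<lambda>\<beta>. of_nat (block_deg m 0 \<beta>)) P"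
    using block_euler[where b = 0 and X = P and m = m] by simp
  ultimately have "x_du m (u_dx m P) - u_dx m (x_du m P) = eig_apply m (\<lambda>p q. of_nat p - of_nat q) P"
    by (simp add: x_du_u_dx_expand u_dx_x_du_expand block_euler eig_apply_eq_scale_coeffs
        scale_coeffs_diff_weight)
  then show ?thesis
    by (simp add: eig_apply_uminus eig_Hx_def eig_Hu_def)
qed

lemma pderiv_var_pderiv_var_var_mult:
  "pderiv_var i (pderiv_var i (var a * Z)) =
    (if i = a then 2 * pderiv_var i Z else 0) + var a * pderiv_var i (pderiv_var i Z)"
  by (cases "i = a") (simp_all add: pderiv_var_mult pderiv_var_add)

lemma block_lap_u_u_dx: "block_lap m m (u_dx m P) = u_dx m (block_lap m m P) + 2 * du_dx m P"
proof -
  have "block_lap m m (u_dx m P) =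
      (\<Sum>j<m. \<Sum>k<m. pderiv_var (m + k) (pderiv_var (m + k) (var (m + j) * pderiv_var j P)))"
    unfolding block_lap_def u_dx_def pderiv_var_sum by (rule sum.swap)
  also have "\<dots> = (\<Sum>j<m. 2 * pderiv_var (m + j) (pderiv_var j P) +
      var (m + j) * block_lap m m (pderiv_var j P))"
  proof (intro sum.cong refl)
    fix j assume "j \<in> {..<m}"
    then show "(\<Sum>k<m. pderiv_var (m + k) (pderiv_var (m + k) (var (m + j) * pderiv_var j P))) =
        2 * pderiv_var (m + j) (pderiv_var j P) + var (m + j) * block_lap m m (pderiv_var j P)"
      by (simp add: pderiv_var_pderiv_var_var_mult sum.distrib block_lap_def sum_distrib_left
          sum.delta cong: if_cong)
  qed
  also have "\<dots> = u_dx m (block_lap m m P) + 2 * du_dx m P"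
    by (simp add: sum.distrib u_dx_def du_dx_def pderiv_var_block_lap sum_distrib_left add.commute)
  finally show ?thesis .
qed

lemma block_lap_x_x_du: "block_lap m 0 (x_du m P) = x_du m (block_lap m 0 P) + 2 * du_dx m P"
proof -
  have "block_lap m 0 (x_du m P) =
      (\<Sum>j<m. \<Sum>k<m. pderiv_var k (pderiv_var k (var j * pderiv_var (m + j) P)))"
    unfolding block_lap_def x_du_def pderiv_var_sum by simp (rule sum.swap)
  also have "\<dots> = (\<Sum>j<m. 2 * pderiv_var j (pderiv_var (m + j) P) +
      var j * block_lap m 0 (pderiv_var (m + j) P))"
  proof (intro sum.cong refl)
    fix j assume "j \<in> {..<m}"
    then show "(\<Sum>k<m. pderiv_var k (pderiv_var k (var j * pderiv_var (m + j) P))) =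
        2 * pderiv_var j (pderiv_var (m + j) P) + var j * block_lap m 0 (pderiv_var (m + j) P)"
      by (simp add: pderiv_var_pderiv_var_var_mult sum.distrib block_lap_def sum_distrib_left
          sum.delta cong: if_cong)
  qed
  also have "\<dots> = x_du m (block_lap m 0 P) + 2 * du_dx m P"
    by (simp add: sum.distrib x_du_def du_dx_def pderiv_var_block_lap sum_distrib_left add.commute
        pderiv_var_commute)
  finally show ?thesis .
qed

lemma block_lap_x_u_dx: "block_lap m 0 (u_dx m P) = u_dx m (block_lap m 0 P)"
proof -
  have "block_lap m 0 (u_dx m P) =
      (\<Sum>j<m. \<Sum>k<m. pderiv_var k (pderiv_var k (var (m + j) * pderiv_var j P)))"
    unfolding block_lap_def u_dx_def pderiv_var_sum by simp (rule sum.swap)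
  also have "\<dots> = (\<Sum>j<m. var (m + j) * (\<Sum>k<m. pderiv_var k (pderiv_var k (pderiv_var j P))))"
    by (intro sum.cong refl) (simp add: pderiv_var_pderiv_var_var_mult sum_distrib_left)
  also have "\<dots> = u_dx m (block_lap m 0 P)"
    using pderiv_var_block_lap[of _ m 0] by (simp add: u_dx_def block_lap_def)
  finally show ?thesis .
qed

lemma block_lap_u_x_du: "block_lap m m (x_du m P) = x_du m (block_lap m m P)"
proof -
  have "block_lap m m (x_du m P) =
      (\<Sum>j<m. \<Sum>k<m. pderiv_var (m + k) (pderiv_var (m + k) (var j * pderiv_var (m + j) P)))"
    unfolding block_lap_def x_du_def pderiv_var_sum by (rule sum.swap)
  also have "\<dots> = (\<Sum>j<m. var j * (\<Sum>k<m. pderiv_var (m + k) (pderiv_var (m + k) (pderiv_var (m + j) P))))"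
    by (intro sum.cong refl) (simp add: pderiv_var_pderiv_var_var_mult sum_distrib_left)
  also have "\<dots> = x_du m (block_lap m m P)"
    using pderiv_var_block_lap[of _ m m] by (simp add: x_du_def block_lap_def)
  finally show ?thesis .
qed

lemma block_lap_du_dx: "block_lap m b (du_dx m P) = du_dx m (block_lap m b P)"
  by (simp add: du_dx_def block_lap_sum pderiv_var_block_lap[symmetric])

lemma in_vars_u_dx: "in_vars m P \<Longrightarrow> in_vars m (u_dx m P)"
  unfolding u_dx_def by (auto intro!: in_vars_sum in_vars_var_mult in_vars_pderiv_var)

lemma in_vars_x_du: "in_vars m P \<Longrightarrow> in_vars m (x_du m P)"
  unfolding x_du_def by (auto intro!: in_vars_sum in_vars_var_mult in_vars_pderiv_var)

lemma in_vars_du_dx: "in_vars m P \<Longrightarrow> in_vars m (du_dx m P)"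
  unfolding du_dx_def by (auto intro!: in_vars_sum in_vars_pderiv_var)

lemma in_vars_ux_mult: "in_vars m Y \<Longrightarrow> in_vars m (ux m * Y)"
  unfolding ux_mult_eq_sum by (auto intro!: in_vars_sum in_vars_var_mult)

lemma harm_du_dx: "harm m P \<Longrightarrow> harm m (du_dx m P)"
  by (simp add: harm_iff in_vars_du_dx block_lap_du_dx) (simp add: du_dx_def)

section \<open>\<open>S\<^sub>x\<close> and \<open>S\<^sub>u\<close> on harmonic polynomials\<close>

lemma block_lap_normsq_mult_rescaled:
  assumes "0 < m" and "block_lap m b D = 0"
  shows "block_lap m b (block_normsq m b *
      scale_coeffs (\<lambda>\<beta>. inverse (of_nat (m + 2 * block_deg m b \<beta>))) D) = 2 * D"
proof -
  have "block_lap m b (scale_coeffs (\<lambda>\<beta>. inverse (of_nat (m + 2 * block_deg m b \<beta>))) D) = 0"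
    using block_lap_scale_block_deg[of m b "\<lambda>d. inverse (of_nat (m + 2 * d))" D] assms(2) by simp
  moreover have "(of_nat (2 * m + 4 * d) :: complex) * inverse (of_nat (m + 2 * d)) = 2" for d
  proof -
    have "(of_nat (m + 2 * d) :: complex) \<noteq> 0"
      using assms(1) of_nat_eq_0_iff[where 'a = complex] by (metis add_is_0 not_gr_zero)
    then show ?thesis
      by (simp add: field_simps)
  qed
  ultimately show ?thesis
    by (simp add: block_lap_block_normsq_mult scale_coeffs_scale_coeffs numeral_mult_eq_scale_coeffs)
qed

lemma S_u_harm:
  assumes "0 < m" and "harm m P"
  shows "S_u m P = u_dx m P -
    normsq_u m * eig_apply m (\<lambda>p q. inverse (of_nat (m + 2 * q))) (du_dx m P)"
  unfolding S_u_def
proof (rule pi_s_eqI[OF assms(1), of _ _ 0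
      "eig_apply m (\<lambda>p q. inverse (of_nat (m + 2 * q))) (du_dx m P)"])
  let ?K = "eig_apply m (\<lambda>p q. inverse (of_nat (m + 2 * q))) (du_dx m P)"
  have K: "harm m ?K"
    using assms(2) by (intro harm_eig_apply harm_du_dx)
  show "in_vars m (u_dx m P)"
    using assms(2) by (simp add: harm_in_vars in_vars_u_dx)
  have "block_lap m m (normsq_u m * ?K) = 2 * du_dx m P"
    using block_lap_normsq_mult_rescaled[OF assms(1), of m "du_dx m P"] harm_du_dx[OF assms(2)]
    by (simp add: normsq_u_eq eig_apply_eq_scale_coeffs harm_iff)
  then show "harm m (u_dx m P - normsq_u m * ?K)"
    using assms(2) K
    by (simp add: harm_iff normsq_u_eq in_vars_diff in_vars_u_dx in_vars_block_normsq_mult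
        block_lap_diff block_lap_x_u_dx block_lap_u_u_dx block_lap_other_block_normsq_mult)
qed (simp add: normsq_u_eq)

lemma S_x_harm:
  assumes "0 < m" and "harm m P"
  shows "S_x m P = x_du m P -
    normsq_x m * eig_apply m (\<lambda>p q. inverse (of_nat (m + 2 * p))) (du_dx m P)"
  unfolding S_x_def
proof (rule pi_s_eqI[OF assms(1), of _ _
      "eig_apply m (\<lambda>p q. inverse (of_nat (m + 2 * p))) (du_dx m P)" 0])
  let ?K = "eig_apply m (\<lambda>p q. inverse (of_nat (m + 2 * p))) (du_dx m P)"
  have K: "harm m ?K"
    using assms(2) by (intro harm_eig_apply harm_du_dx)
  show "in_vars m (x_du m P)"
    using assms(2) by (simp add: harm_in_vars in_vars_x_du)
  have "block_lap m 0 (normsq_x m * ?K) = 2 * du_dx m P"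
    using block_lap_normsq_mult_rescaled[OF assms(1), of 0 "du_dx m P"] harm_du_dx[OF assms(2)]
    by (simp add: normsq_x_eq eig_apply_eq_scale_coeffs harm_iff)
  then show "harm m (x_du m P - normsq_x m * ?K)"
    using assms(2) K
    by (simp add: harm_iff normsq_x_eq in_vars_diff in_vars_x_du in_vars_block_normsq_mult
        block_lap_diff block_lap_x_x_du block_lap_u_x_du block_lap_other_block_normsq_mult)
qed (simp add: normsq_x_eq)

lemma A_op_harm: "0 < m \<Longrightarrow> harm m P \<Longrightarrow> A_op m P = du_dx m P"
  unfolding A_op_def by (intro pi_s_harm harm_du_dx)

lemma two_inverse_diff_eq_eig_quotient:
  assumes "0 < m"
  shows "2 * inverse (of_nat (m + 2 * p)) - 2 * inverse (of_nat (m + 2 * q)) =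
    (eig_Hx m (p + 1) - eig_Hu m (q + 1)) / ((1 + eig_Hx m (p + 1)) * (1 + eig_Hu m (q + 1)))"
proof -
  have "(of_nat (m + 2 * p) :: complex) \<noteq> 0" and "(of_nat (m + 2 * q) :: complex) \<noteq> 0"
    using assms of_nat_eq_0_iff[where 'a = complex] by (metis add_is_0 not_gr_zero)+
  moreover have "1 + eig_Hx m (p + 1) = - of_nat (m + 2 * p) / 2"
    and "1 + eig_Hu m (q + 1) = - of_nat (m + 2 * q) / 2"
    and "eig_Hx m (p + 1) - eig_Hu m (q + 1) = of_nat q - of_nat p"
    by (simp_all add: eig_Hx_def eig_Hu_def field_simps)
  ultimately show ?thesis
    by (simp only:) (simp add: field_simps)
qed

lemma x_du_S_u_diff_u_dx_S_x:
  assumes m: "0 < m" and P: "harm m P"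
  defines "F \<equiv> \<lambda>p q. (eig_Hx m p - eig_Hu m q) / ((1 + eig_Hx m p) * (1 + eig_Hu m q))"
    and "D \<equiv> du_dx m P"
    and "Kx \<equiv> eig_apply m (\<lambda>p q. inverse (of_nat (m + 2 * p))) (du_dx m P)"
    and "Ku \<equiv> eig_apply m (\<lambda>p q. inverse (of_nat (m + 2 * q))) (du_dx m P)"
  shows "x_du m (S_u m P) - u_dx m (S_x m P) =
    eig_apply m F (ux m * D) + normsq_x m * u_dx m Kx - normsq_u m * x_du m Ku -
    eig_apply m (\<lambda>p q. eig_Hx m p - eig_Hu m q) P"
proof -
  have "2 * Kx - 2 * Ku =
      eig_apply m (\<lambda>p q. 2 * inverse (of_nat (m + 2 * p)) - 2 * inverse (of_nat (m + 2 * q))) D"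
    unfolding Kx_def Ku_def D_def numeral_mult_eq_eig_apply[where m = m] eig_apply_eig_apply
      eig_apply_diff_fun ..
  also have "\<dots> = eig_apply m (\<lambda>p q. F (p + 1) (q + 1)) D"
    unfolding F_def two_inverse_diff_eq_eig_quotient[OF m] ..
  finally have K: "2 * Kx - 2 * Ku = eig_apply m (\<lambda>p q. F (p + 1) (q + 1)) D" .
  have Sx: "S_x m P = x_du m P - normsq_x m * Kx" and Su: "S_u m P = u_dx m P - normsq_u m * Ku"
    using S_x_harm[OF m P] S_u_harm[OF m P] by (simp_all add: Kx_def Ku_def)
  have "x_du m (S_u m P) - u_dx m (S_x m P) =
      (x_du m (u_dx m P) - u_dx m (x_du m P)) + normsq_x m * u_dx m Kx - normsq_u m * x_du m Ku +
      ux m * (2 * Kx - 2 * Ku)"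
    unfolding Sx Su x_du_diff u_dx_diff x_du_normsq_u_mult u_dx_normsq_x_mult
    by (simp add: algebra_simps)
  also have "\<dots> = eig_apply m F (ux m * D) + normsq_x m * u_dx m Kx - normsq_u m * x_du m Ku -
      eig_apply m (\<lambda>p q. eig_Hx m p - eig_Hu m q) P"
    unfolding x_du_u_dx_commutator K ux_mult_eig_apply by simp
  finally show ?thesis .
qed

theorem lemma3p4:
  fixes m :: nat and P :: cpoly
  assumes "m > 4" and "harm m P"
  shows "S_x m (S_u m P) - S_u m (S_x m P) =
    eig_apply m (\<lambda>p q. (eig_Hx m p - eig_Hu m q) / ((1 + eig_Hx m p) * (1 + eig_Hu m q)))
      (C_op m (A_op m P))
    - eig_apply m (\<lambda>p q. eig_Hx m p - eig_Hu m q) P"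
proof -
  have m: "0 < m" \<comment> \<open>the only use of \<open>m > 4\<close>\<close>
    using assms(1) by simp
  have P: "in_vars m P"
    using assms(2) by (rule harm_in_vars)
  have "S_x m (S_u m P) - S_u m (S_x m P) = pi_s m (x_du m (S_u m P) - u_dx m (S_x m P))"
    using P by (simp add: S_x_def S_u_def pi_s_diff[OF m] in_vars_x_du in_vars_u_dx harm_in_vars
        harm_pi_s[OF m])
  also have "\<dots> =
      eig_apply m (\<lambda>p q. (eig_Hx m p - eig_Hu m q) / ((1 + eig_Hx m p) * (1 + eig_Hu m q)))
        (C_op m (A_op m P)) - eig_apply m (\<lambda>p q. eig_Hx m p - eig_Hu m q) P"
    unfolding x_du_S_u_diff_u_dx_S_x[OF m assms(2)] using P assms(2)
    by (simp add: pi_s_add[OF m] pi_s_diff[OF m] pi_s_normsq_x_mult[OF m] pi_s_normsq_u_mult[OF m]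
        pi_s_harm[OF m] pi_s_eig_apply[OF m] harm_eig_apply in_vars_eig_apply in_vars_add
        in_vars_diff in_vars_normsq_x_mult in_vars_normsq_u_mult in_vars_u_dx in_vars_x_du
        in_vars_du_dx in_vars_ux_mult C_op_def A_op_harm[OF m])
  finally show ?thesis .
qed

end
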